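(* Let $q$ be a prime power, $2\le n\le m$, let $C\subseteq\mathbb{F}_{q^m}^n$ be a vector rank-metric code, and let $\Gamma$ be a basis of $\mathbb{F}_{q^m}$ over $\mathbb{F}_q$ with dual basis $\Gamma^*$. Then $P(\Gamma(C^{\perp\!\!\perp}),\mathrm c)=P(\Gamma^*(C),\mathrm c)^*=P(\Gamma(C),\mathrm c)^*$ and $P(\Gamma(C^{\perp\!\!\perp}),\mathrm r)=P(\Gamma^*(C),\mathrm r)^*\sim P(\Gamma(C),\mathrm r)^*$.
   Context: A vector rank-metric code is an $\mathbb{F}_{q^m}$-linear subspace $C\subseteq\mathbb{F}_{q^m}^n$; its dual is $C^{\perp\!\!\perp}=\{v\in\mathbb{F}_{q^m}^n\mid\langle v,w\rangle=0\ \forall w\in C\}$ for the standard inner product of $\mathbb{F}_{q^m}^n$. For an $\mathbb{F}_q$-basis $\Gamma=\{\gamma_1,\dots,\gamma_m\}$ of $\mathbb{F}_{q^m}$, the dual basis $\Gamma^*=\{\gamma_1^*,\dots,\gamma_m^*\}$ is the one with $\mathrm{Tr}_{\mathbb{F}_{q^m}/\mathbb{F}_q}(\gamma_i\gamma_j^* )=\delta_{ij}$. For $v\in\mathbb{F}_{q^m}^n$, $\Gamma(v)$ is the unique $n\times m$ matrix over $\mathbb{F}_q$ with $v_i=\sum_j\Gamma(v)_{ij}\gamma_j$, and $\Gamma(C)=\{\Gamma(v)\mid v\in C\}$. For an $\mathbb{F}_q$-subspace $\mathcal{C}$ of $n\times m$ matrices and subspaces $J\subseteq\mathbb{F}_q^n$,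 $K\subseteq\mathbb{F}_q^m$: $\mathcal{C}(J,\mathrm c)=\{M\in\mathcal{C}\mid\mathrm{colsp}(M)\subseteq J\}$, $\mathcal{C}(K,\mathrm r)=\{M\in\mathcal{C}\mid\mathrm{rowsp}(M)\subseteq K\}$, $\rho_{\mathrm c}(\mathcal{C},J)=(\dim\mathcal{C}-\dim\mathcal{C}(J^\perp,\mathrm c))/m$, $\rho_{\mathrm r}(\mathcal{C},K)=(\dim\mathcal{C}-\dim\mathcal{C}(K^\perp,\mathrm r))/n$ ($\perp$ for the standard inner product); $P(\mathcal{C},\mathrm c)=(\mathbb{F}_q^n,\rho_{\mathrm c}(\mathcal{C},\cdot))$, $P(\mathcal{C},\mathrm r)=(\mathbb{F}_q^m,\rho_{\mathrm r}(\mathcal{C},\cdot))$. The dual of a $q$-polymatroid $P=(\mathbb{F}_q^N,\rho)$ is $P^*=(\mathbb{F}_q^N,\rho^* )$ with $\rho^*(A)=\dim(A)-\rho(\mathbb{F}_q^N)+\rho(A^\perp)$. Two pairs $(\mathbb{F}_q^N,\rho_1)$, $(\mathbb{F}_q^N,\rho_2)$ are equivalent ($\sim$) if there is an $\mathbb{F}_q$-linear isomorphism $\varphi$ of $\mathbb{F}_q^N$ with $\rho_1(A)=\rho_2(\varphi(A))$ for all subspaces $A$. *)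

theory Defs
  imports Complex_Main "HOL-Library.Function_Algebras"
begin

section \<open>Finite fields: F_q as a subfield K of a finite field 'b = F_{q^m}\<close>

definition subfield :: "'b::field set \<Rightarrow> bool" where
  "subfield K \<longleftrightarrow> 0 \<in> K \<and> 1 \<in> K \<and> (\<forall>x\<in>K. \<forall>y\<in>K. x + y \<in> K \<and> x * y \<in> K)
     \<and> (\<forall>x\<in>K. - x \<in> K \<and> inverse x \<in> K)"

definition kspan :: "'s set \<Rightarrow> ('s \<Rightarrow> 'v \<Rightarrow> 'v) \<Rightarrow> 'v::comm_monoid_add set \<Rightarrow> 'v set" where
  "kspan S sc B = {v. \<exists>F c. finite F \<and> F \<subseteq> B \<and> (\<forall>x\<in>F. c x \<in> S) \<and> v = (\<Sum>x\<in>F. sc (c x) x)}"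

definition ksubspace :: "'s set \<Rightarrow> ('s \<Rightarrow> 'v \<Rightarrow> 'v) \<Rightarrow> 'v::comm_monoid_add set \<Rightarrow> bool" where
  "ksubspace S sc V \<longleftrightarrow> 0 \<in> V \<and> (\<forall>x\<in>V. \<forall>y\<in>V. x + y \<in> V) \<and> (\<forall>c\<in>S. \<forall>x\<in>V. sc c x \<in> V)"

definition kdim :: "'s set \<Rightarrow> ('s \<Rightarrow> 'v \<Rightarrow> 'v) \<Rightarrow> 'v::comm_monoid_add set \<Rightarrow> nat" where
  "kdim S sc V = (LEAST d. \<exists>B. finite B \<and> card B = d \<and> B \<subseteq> V \<and> kspan S sc B = V)"

section \<open>Vectors and matrices (indices from 0; entries outside the range are 0)\<close>

text \<open>F^N for a subset K of scalars: vecs K N (with K = UNIV this is F_{q^m}^N).\<close>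
definition vecs :: "'b::field set \<Rightarrow> nat \<Rightarrow> (nat \<Rightarrow> 'b) set" where
  "vecs K N = {v. (\<forall>i<N. v i \<in> K) \<and> (\<forall>i\<ge>N. v i = 0)}"

definition vsc :: "'b::field \<Rightarrow> (nat \<Rightarrow> 'b) \<Rightarrow> (nat \<Rightarrow> 'b)" where
  "vsc c v = (\<lambda>i. c * v i)"

definition msc :: "'b::field \<Rightarrow> (nat \<Rightarrow> nat \<Rightarrow> 'b) \<Rightarrow> (nat \<Rightarrow> nat \<Rightarrow> 'b)" where
  "msc c M = (\<lambda>i j. c * M i j)"

definition dotp :: "nat \<Rightarrow> (nat \<Rightarrow> 'b::field) \<Rightarrow> (nat \<Rightarrow> 'b) \<Rightarrow> 'b" where
  "dotp N u v = (\<Sum>i<N. u i * v i)"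

definition perp :: "'b::field set \<Rightarrow> nat \<Rightarrow> (nat \<Rightarrow> 'b) set \<Rightarrow> (nat \<Rightarrow> 'b) set" where
  "perp K N A = {v \<in> vecs K N. \<forall>u\<in>A. dotp N u v = 0}"

definition rm_code :: "nat \<Rightarrow> (nat \<Rightarrow> 'b::field) set \<Rightarrow> bool" where
  "rm_code n C \<longleftrightarrow> C \<subseteq> vecs UNIV n \<and> ksubspace UNIV vsc C"

definition trace :: "'b::field set \<Rightarrow> nat \<Rightarrow> 'b \<Rightarrow> 'b" where
  "trace K m x = (\<Sum>i<m. x ^ (card K ^ i))"

definition is_basis :: "'b::field set \<Rightarrow> nat \<Rightarrow> (nat \<Rightarrow> 'b) \<Rightarrow> bool" where
  "is_basis K m g \<longleftrightarrow>
     (\<forall>c. (\<forall>j<m. c j \<in> K) \<and> (\<Sum>j<m. c j * g j) = 0 \<longrightarrow> (\<forall>j<m. c j = 0)) \<and>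
     (\<forall>x. \<exists>c. (\<forall>j<m. c j \<in> K) \<and> x = (\<Sum>j<m. c j * g j))"

definition is_dual_basis :: "'b::field set \<Rightarrow> nat \<Rightarrow> (nat \<Rightarrow> 'b) \<Rightarrow> (nat \<Rightarrow> 'b) \<Rightarrow> bool" where
  "is_dual_basis K m g gs \<longleftrightarrow> is_basis K m gs \<and>
     (\<forall>i<m. \<forall>j<m. trace K m (g i * gs j) = (if i = j then 1 else 0))"

definition coord :: "'b::field set \<Rightarrow> nat \<Rightarrow> (nat \<Rightarrow> 'b) \<Rightarrow> 'b \<Rightarrow> nat \<Rightarrow> 'b" where
  "coord K m g x = (THE c. (\<forall>j<m. c j \<in> K) \<and> (\<forall>j\<ge>m. c j = 0) \<and> x = (\<Sum>j<m. c j * g j))"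

text \<open>Gamma(v): the n x m matrix over F_q with v_i = sum_j Gamma(v)_ij gamma_j.\<close>
definition gmat :: "'b::field set \<Rightarrow> nat \<Rightarrow> nat \<Rightarrow> (nat \<Rightarrow> 'b) \<Rightarrow> (nat \<Rightarrow> 'b) \<Rightarrow> (nat \<Rightarrow> nat \<Rightarrow> 'b)" where
  "gmat K n m g v = (\<lambda>i j. if i < n then coord K m g (v i) j else 0)"

definition gimg :: "'b::field set \<Rightarrow> nat \<Rightarrow> nat \<Rightarrow> (nat \<Rightarrow> 'b) \<Rightarrow> (nat \<Rightarrow> 'b) set \<Rightarrow> (nat \<Rightarrow> nat \<Rightarrow> 'b) set" where
  "gimg K n m g C = gmat K n m g ` C"

definition colsp :: "'b::field set \<Rightarrow> nat \<Rightarrow> (nat \<Rightarrow> nat \<Rightarrow> 'b) \<Rightarrow> (nat \<Rightarrow> 'b) set" where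
  "colsp K m M = kspan K vsc {(\<lambda>i. M i j) | j. j < m}"

definition rowsp :: "'b::field set \<Rightarrow> nat \<Rightarrow> (nat \<Rightarrow> nat \<Rightarrow> 'b) \<Rightarrow> (nat \<Rightarrow> 'b) set" where
  "rowsp K n M = kspan K vsc {(\<lambda>j. M i j) | i. i < n}"

definition restr_c :: "'b::field set \<Rightarrow> nat \<Rightarrow> (nat \<Rightarrow> nat \<Rightarrow> 'b) set \<Rightarrow> (nat \<Rightarrow> 'b) set \<Rightarrow> (nat \<Rightarrow> nat \<Rightarrow> 'b) set" where
  "restr_c K m CC J = {M \<in> CC. colsp K m M \<subseteq> J}"

definition restr_r :: "'b::field set \<Rightarrow> nat \<Rightarrow> (nat \<Rightarrow> nat \<Rightarrow> 'b) set \<Rightarrow> (nat \<Rightarrow> 'b) set \<Rightarrow> (nat \<Rightarrow> nat \<Rightarrow> 'b) set" where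
  "restr_r K n CC L = {M \<in> CC. rowsp K n M \<subseteq> L}"

text \<open>rank function of P(CC, c), a q-polymatroid on F_q^n\<close>
definition rho_c :: "'b::field set \<Rightarrow> nat \<Rightarrow> nat \<Rightarrow> (nat \<Rightarrow> nat \<Rightarrow> 'b) set \<Rightarrow> (nat \<Rightarrow> 'b) set \<Rightarrow> real" where
  "rho_c K n m CC J = (real (kdim K msc CC) - real (kdim K msc (restr_c K m CC (perp K n J)))) / real m"

text \<open>rank function of P(CC, r), a q-polymatroid on F_q^m\<close>
definition rho_r :: "'b::field set \<Rightarrow> nat \<Rightarrow> nat \<Rightarrow> (nat \<Rightarrow> nat \<Rightarrow> 'b) set \<Rightarrow> (nat \<Rightarrow> 'b) set \<Rightarrow> real" where
  "rho_r K n m CC L = (real (kdim K msc CC) - real (kdim K msc (restr_r K n CC (perp K m L)))) / real n"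

text \<open>rank function of the dual q-polymatroid of (F_q^N, rho)\<close>
definition pdual :: "'b::field set \<Rightarrow> nat \<Rightarrow> ((nat \<Rightarrow> 'b) set \<Rightarrow> real) \<Rightarrow> (nat \<Rightarrow> 'b) set \<Rightarrow> real" where
  "pdual K N rho A = real (kdim K vsc A) - rho (vecs K N) + rho (perp K N A)"

definition qpm_eq :: "'b::field set \<Rightarrow> nat \<Rightarrow> ((nat \<Rightarrow> 'b) set \<Rightarrow> real) \<Rightarrow> ((nat \<Rightarrow> 'b) set \<Rightarrow> real) \<Rightarrow> bool" where
  "qpm_eq K N rho1 rho2 \<longleftrightarrow>
     (\<forall>A. A \<subseteq> vecs K N \<and> ksubspace K vsc A \<longrightarrow> rho1 A = rho2 A)"

definition qpm_equiv :: "'b::field set \<Rightarrow> nat \<Rightarrow> ((nat \<Rightarrow> 'b) set \<Rightarrow> real) \<Rightarrow> ((nat \<Rightarrow> 'b) set \<Rightarrow> real) \<Rightarrow> bool" where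
  "qpm_equiv K N rho1 rho2 \<longleftrightarrow>
     (\<exists>\<phi>. bij_betw \<phi> (vecs K N) (vecs K N) \<and>
          (\<forall>u\<in>vecs K N. \<forall>v\<in>vecs K N. \<phi> (u + v) = \<phi> u + \<phi> v) \<and>
          (\<forall>c\<in>K. \<forall>u\<in>vecs K N. \<phi> (vsc c u) = vsc c (\<phi> u)) \<and>
          (\<forall>A. A \<subseteq> vecs K N \<and> ksubspace K vsc A \<longrightarrow> rho1 A = rho2 (\<phi> ` A)))"

end

theory Submission
  imports Defs "HOL-Library.FuncSet" "HOL-Library.Set_Algebras" "HOL-Number_Theory.Cong" "HOL-Computational_Algebra.Primes"
begin

text \<open>Everything is reduced to counting over \<open>F\<^sub>q\<close>: a subspace of dimension \<open>k\<close> has \<open>q\<^sup>k\<close>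
  elements and \<open>|W| |W\<^sup>\<perp>| = q\<^sup>N\<close>. Together with Grassmann's formula this gives, for
  \<open>F\<^sub>q\<close>-linear matrix codes, \<open>dim (D\<^sup>\<perp> \<inter> E\<^sup>\<perp>) + dim D + dim E = nm + dim (D \<inter> E)\<close>. Applied to
  \<open>E\<close> = the matrices with all columns (rows) in \<open>A\<close>, whose dual consists of the matrices with
  columns (rows) in \<open>A\<^sup>\<perp>\<close>, this says that the column (row) q-polymatroid of \<open>D\<^sup>\<perp>\<close> is the dual
  of that of \<open>D\<close>. Trace duality \<open>Tr \<langle>w, v\<rangle> = \<Sum>\<^sub>i\<^sub>j \<Gamma>\<^sup>*(w)\<^sub>i\<^sub>j \<Gamma>(v)\<^sub>i\<^sub>j\<close> identifies \<open>\<Gamma>(C\<^sup>\<perp>\<^sup>\<perp>)\<close>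
  with \<open>\<Gamma>\<^sup>*(C)\<^sup>\<perp>\<close>. Finally, the columns of \<open>\<Gamma>(v)\<close> lie in \<open>A\<close> iff \<open>v \<perp> A\<^sup>\<perp>\<close>, independently
  of the basis, while the rows of \<open>\<Gamma>(v)\<close> are those of \<open>\<Gamma>\<^sup>*(v)\<close> moved by the change of basis
  from \<open>\<Gamma>\<^sup>*\<close> to \<open>\<Gamma>\<close>, an \<open>F\<^sub>q\<close>-isomorphism of \<open>F\<^sub>q\<^sup>m\<close>.\<close>

lemma subfieldD:
  assumes "subfield K"
  shows subfield_zero: "0 \<in> K" and subfield_one: "1 \<in> K"
    and subfield_add: "x \<in> K \<Longrightarrow> y \<in> K \<Longrightarrow> x + y \<in> K"
    and subfield_mult: "x \<in> K \<Longrightarrow> y \<in> K \<Longrightarrow> x * y \<in> K"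
    and subfield_uminus: "x \<in> K \<Longrightarrow> - x \<in> K"
    and subfield_inverse: "x \<in> K \<Longrightarrow> inverse x \<in> K"
    and subfield_diff: "x \<in> K \<Longrightarrow> y \<in> K \<Longrightarrow> x - y \<in> K"
  using assms unfolding subfield_def diff_conv_add_uminus by blast+

lemma subfield_sum: "subfield K \<Longrightarrow> (\<And>i. i \<in> F \<Longrightarrow> f i \<in> K) \<Longrightarrow> sum f F \<in> K"
  by (induction F rule: infinite_finite_induct) (auto simp: subfield_zero subfield_add)

lemma subfield_UNIV: "subfield (UNIV :: 'b::field set)"
  by (simp add: subfield_def)

lemma card_subfield_ge_2:
  assumes "subfield K" "finite K"
  shows "2 \<le> card K"
proof -
  have "{0, 1} \<subseteq> K" using assms(1) by (simp add: subfield_zero subfield_one)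
  from card_mono[OF assms(2) this] show ?thesis by simp
qed

section \<open>Linear algebra over a finite subfield\<close>

locale subfield_module =
  fixes S :: "'b::field set" and sc :: "'b \<Rightarrow> 'v::ab_group_add \<Rightarrow> 'v"
  assumes subfield: "subfield S" and finite_scalars: "finite S"
    and sc_add_right: "sc a (x + y) = sc a x + sc a y"
    and sc_add_left: "sc (a + b) x = sc a x + sc b x"
    and sc_sc: "sc a (sc b x) = sc (a * b) x"
    and sc_one: "sc 1 x = x"
begin

lemma sc_zero_left [simp]: "sc 0 x = 0"
  using sc_add_left[of 0 0 x] by simp

lemma sc_zero_right [simp]: "sc a 0 = 0"
  using sc_add_right[of a 0 0] by simp

lemma sc_minus_left: "sc (- a) x = - sc a x"
  using sc_add_left[of "-a" a x] by (simp add: eq_neg_iff_add_eq_0)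

lemma sc_minus_right: "sc a (- x) = - sc a x"
  using sc_add_right[of a "-x" x] by (simp add: eq_neg_iff_add_eq_0)

lemma sc_diff_left: "sc (a - b) x = sc a x - sc b x"
  using sc_add_left[of a "-b" x] by (simp add: sc_minus_left)

lemma sc_sum_right: "sc a (sum f F) = (\<Sum>x\<in>F. sc a (f x))"
  by (induction F rule: infinite_finite_induct) (auto simp: sc_add_right)

lemma ksubspace_sum:
  assumes "ksubspace S sc V" "\<And>x. x \<in> F \<Longrightarrow> f x \<in> V"
  shows "sum f F \<in> V"
  using assms(2) assms(1)[unfolded ksubspace_def]
  by (induction F rule: infinite_finite_induct) auto

lemma kspan_superset: "x \<in> B \<Longrightarrow> x \<in> kspan S sc B"
  unfolding kspan_def
  by (intro CollectI exI[of _ "{x}"] exI[of _ "\<lambda>_. 1"]) (auto simp: sc_one subfield_one[OF subfield])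

lemma kspan_least:
  assumes "ksubspace S sc V" "B \<subseteq> V"
  shows "kspan S sc B \<subseteq> V"
proof
  fix x assume "x \<in> kspan S sc B"
  then obtain F c where "F \<subseteq> B" "\<forall>z\<in>F. c z \<in> S" "x = (\<Sum>z\<in>F. sc (c z) z)"
    unfolding kspan_def by blast
  then show "x \<in> V" using assms by (auto intro!: ksubspace_sum[OF assms(1)] simp: ksubspace_def)
qed

lemma kspan_subset_iff: "ksubspace S sc V \<Longrightarrow> kspan S sc B \<subseteq> V \<longleftrightarrow> B \<subseteq> V"
  using kspan_least kspan_superset by blast

lemma kspan_eq_sum_over:
  assumes "x \<in> kspan S sc B" "finite B"
  obtains c where "\<forall>z\<in>B. c z \<in> S" "x = (\<Sum>z\<in>B. sc (c z) z)"
proof -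
  from assms obtain F c where F: "finite F" "F \<subseteq> B" "\<forall>z\<in>F. c z \<in> S" "x = (\<Sum>z\<in>F. sc (c z) z)"
    unfolding kspan_def by blast
  have "(\<Sum>z\<in>B. sc (if z \<in> F then c z else 0) z) = (\<Sum>z\<in>F. sc (c z) z)"
    using F assms(2) by (intro sum.mono_neutral_cong_right) auto
  then show thesis
    using F that[of "\<lambda>z. if z \<in> F then c z else 0"] by (auto simp: subfield_zero[OF subfield])
qed

lemma ksubspace_kspan: "ksubspace S sc (kspan S sc B)"
  unfolding ksubspace_def
proof (intro conjI ballI)
  show "0 \<in> kspan S sc B" unfolding kspan_def by (intro CollectI exI[of _ "{}"]) auto
next
  fix x y assume "x \<in> kspan S sc B" "y \<in> kspan S sc B"
  then obtain F c G d where F: "finite F" "F \<subseteq> B" "\<forall>z\<in>F. c z \<in> S" "x = (\<Sum>z\<in>F. sc (c z) z)"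
    and G: "finite G" "G \<subseteq> B" "\<forall>z\<in>G. d z \<in> S" "y = (\<Sum>z\<in>G. sc (d z) z)"
    unfolding kspan_def by blast
  define e where "e z = (if z \<in> F then c z else 0) + (if z \<in> G then d z else 0)" for z
  have "(\<Sum>z\<in>F \<union> G. sc (if z \<in> F then c z else 0) z) = x"
    unfolding F(4) using F G by (intro sum.mono_neutral_cong_right) auto
  moreover have "(\<Sum>z\<in>F \<union> G. sc (if z \<in> G then d z else 0) z) = y"
    unfolding G(4) using F G by (intro sum.mono_neutral_cong_right) auto
  ultimately have "x + y = (\<Sum>z\<in>F \<union> G. sc (e z) z)"
    by (simp add: e_def sc_add_left sum.distrib)
  moreover have "\<forall>z\<in>F \<union> G. e z \<in> S"
    using F G subfield by (auto simp: e_def intro!: subfield_add subfield_zero)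
  ultimately show "x + y \<in> kspan S sc B" unfolding kspan_def using F G
    by (intro CollectI exI[of _ "F \<union> G"] exI[of _ e]) auto
next
  fix a x assume a: "a \<in> S" and "x \<in> kspan S sc B"
  then obtain F c where F: "finite F" "F \<subseteq> B" "\<forall>z\<in>F. c z \<in> S" "x = (\<Sum>z\<in>F. sc (c z) z)"
    unfolding kspan_def by blast
  then have "sc a x = (\<Sum>z\<in>F. sc (a * c z) z)" by (simp add: sc_sum_right sc_sc)
  then show "sc a x \<in> kspan S sc B" unfolding kspan_def using F a subfield
    by (intro CollectI exI[of _ F] exI[of _ "\<lambda>z. a * c z"]) (auto intro: subfield_mult)
qed

lemma kspan_Diff_dependent:
  assumes B: "finite B" and c: "\<forall>z\<in>B. c z \<in> S" "(\<Sum>z\<in>B. sc (c z) z) = 0"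
    and z0: "z0 \<in> B" "c z0 \<noteq> 0"
  shows "z0 \<in> kspan S sc (B - {z0})"
proof -
  have "sc (c z0) z0 = - (\<Sum>z\<in>B - {z0}. sc (c z) z)"
    using c(2) z0 B by (simp add: sum.remove eq_neg_iff_add_eq_0)
  then have "sc (inverse (c z0)) (sc (c z0) z0) = - (\<Sum>z\<in>B - {z0}. sc (inverse (c z0) * c z) z)"
    by (simp add: sc_minus_right sc_sum_right sc_sc)
  then have "z0 = (\<Sum>z\<in>B - {z0}. sc (- (inverse (c z0) * c z)) z)"
    using z0(2) by (simp add: sc_sc sc_one sc_minus_left sum_negf)
  moreover have "- (inverse (c z0) * c z) \<in> S" if "z \<in> B" for z
    using c(1) z0 that subfield
    by (auto intro!: subfield_uminus subfield_mult subfield_inverse)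
  ultimately show ?thesis unfolding kspan_def using B
    by (intro CollectI exI[of _ "B - {z0}"] exI[of _ "\<lambda>z. - (inverse (c z0) * c z)"]) auto
qed

lemma spanning_set_of_size_kdim:
  assumes "ksubspace S sc V" "finite V"
  obtains B where "finite B" "card B = kdim S sc V" "B \<subseteq> V" "kspan S sc B = V"
proof -
  let ?P = "\<lambda>d. \<exists>B. finite B \<and> card B = d \<and> B \<subseteq> V \<and> kspan S sc B = V"
  have "kspan S sc V = V" using assms(1) kspan_least[of V V] kspan_superset by blast
  then have "?P (card V)" using assms(2) by blast
  then have "?P (kdim S sc V)" unfolding kdim_def by (rule LeastI)
  then show thesis using that by blast
qed

lemma kdim_le_card_spanning: "finite B \<Longrightarrow> B \<subseteq> V \<Longrightarrow> kspan S sc B = V \<Longrightarrow> kdim S sc V \<le> card B"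
  unfolding kdim_def by (rule Least_le) blast

lemma minimal_spanning_set_independent:
  assumes V: "ksubspace S sc V" and B: "finite B" "card B = kdim S sc V" "B \<subseteq> V" "kspan S sc B = V"
    and c: "\<forall>z\<in>B. c z \<in> S" "(\<Sum>z\<in>B. sc (c z) z) = 0"
  shows "\<forall>z\<in>B. c z = 0"
proof (rule ccontr)
  assume "\<not> (\<forall>z\<in>B. c z = 0)"
  then obtain z0 where z0: "z0 \<in> B" "c z0 \<noteq> 0" by blast
  have "z0 \<in> kspan S sc (B - {z0})" using kspan_Diff_dependent[OF B(1) c z0] .
  then have "B \<subseteq> kspan S sc (B - {z0})"
    using kspan_superset[of _ "B - {z0}"] by (metis Diff_iff singletonD subsetI)
  then have "V \<subseteq> kspan S sc (B - {z0})"
    unfolding B(4)[symmetric] by (rule kspan_least[OF ksubspace_kspan])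
  moreover have "kspan S sc (B - {z0}) \<subseteq> V"
    using B(3) by (intro kspan_least[OF V]) auto
  ultimately have "kspan S sc (B - {z0}) = V" by (rule antisym[rotated])
  then have "kdim S sc V \<le> card (B - {z0})" using B by (intro kdim_le_card_spanning) auto
  then show False using B z0 card_Diff1_less[of B z0] by simp
qed

text \<open>Coordinates with respect to a spanning set of minimal size identify \<open>V\<close> with \<open>S\<^sup>B\<close>.\<close>

theorem card_kdim:
  assumes V: "ksubspace S sc V" "finite V"
  shows "card V = card S ^ kdim S sc V"
proof -
  obtain B where B: "finite B" "card B = kdim S sc V" "B \<subseteq> V" "kspan S sc B = V"
    using spanning_set_of_size_kdim[OF V] .
  note indep = minimal_spanning_set_independent[OF V(1) B]
  define f where "f c = (\<Sum>z\<in>B. sc (c z) z)" for c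
  have inj: "inj_on f (B \<rightarrow>\<^sub>E S)"
  proof (rule inj_onI)
    fix c d assume c: "c \<in> B \<rightarrow>\<^sub>E S" and d: "d \<in> B \<rightarrow>\<^sub>E S" and "f c = f d"
    then have "(\<Sum>z\<in>B. sc (c z - d z) z) = 0"
      by (simp add: f_def sc_diff_left sum_subtractf)
    then have "\<forall>z\<in>B. c z - d z = 0"
      using c d by (intro indep) (auto intro: subfield_diff[OF subfield] simp: PiE_iff)
    then show "c = d" using c d by (intro extensionalityI[of _ B]) (auto simp: PiE_def)
  qed
  have "f ` (B \<rightarrow>\<^sub>E S) = V"
  proof
    show "f ` (B \<rightarrow>\<^sub>E S) \<subseteq> V"
      unfolding f_def using V(1) B(3) by (auto intro!: ksubspace_sum[OF V(1)] simp: ksubspace_def PiE_iff subset_iff)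
    show "V \<subseteq> f ` (B \<rightarrow>\<^sub>E S)"
    proof
      fix x assume "x \<in> V"
      then obtain c where c: "\<forall>z\<in>B. c z \<in> S" "x = (\<Sum>z\<in>B. sc (c z) z)"
        using kspan_eq_sum_over[of x B] B by auto
      then have "x = f (restrict c B)" unfolding f_def by simp
      then show "x \<in> f ` (B \<rightarrow>\<^sub>E S)" using c by auto
    qed
  qed
  then have "card V = card (B \<rightarrow>\<^sub>E S)" using inj card_image by fastforce
  also have "\<dots> = card S ^ card B" using B(1) by (simp add: card_funcsetE)
  finally show ?thesis using B(2) by simp
qed

end

section \<open>Coordinate spaces and orthogonal complements\<close>

definition fvecs :: "'b::field set \<Rightarrow> 'i set \<Rightarrow> ('i \<Rightarrow> 'b) set" where
  "fvecs K I = {v. (\<forall>i\<in>I. v i \<in> K) \<and> (\<forall>i. i \<notin> I \<longrightarrow> v i = 0)}"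

definition fsubspace :: "'b::field set \<Rightarrow> 'i set \<Rightarrow> ('i \<Rightarrow> 'b) set \<Rightarrow> bool" where
  "fsubspace K I W \<longleftrightarrow> W \<subseteq> fvecs K I \<and> 0 \<in> W \<and> (\<forall>x\<in>W. \<forall>y\<in>W. x + y \<in> W)
     \<and> (\<forall>c\<in>K. \<forall>x\<in>W. (\<lambda>i. c * x i) \<in> W)"

definition fperp :: "'b::field set \<Rightarrow> 'i set \<Rightarrow> ('i \<Rightarrow> 'b) set \<Rightarrow> ('i \<Rightarrow> 'b) set" where
  "fperp K I W = {v \<in> fvecs K I. \<forall>w\<in>W. (\<Sum>i\<in>I. w i * v i) = 0}"

lemma bij_betw_restrict_fvecs: "bij_betw (\<lambda>v. restrict v I) (fvecs K I) (I \<rightarrow>\<^sub>E K)"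
  by (rule bij_betw_byWitness[where f'="\<lambda>g i. if i \<in> I then g i else 0"])
     (auto simp: fvecs_def fun_eq_iff)

lemma card_fvecs: "finite I \<Longrightarrow> card (fvecs K I) = card K ^ card I"
  using bij_betw_same_card[OF bij_betw_restrict_fvecs, of K I] by (simp add: card_funcsetE)

lemma finite_fvecs: "finite I \<Longrightarrow> finite K \<Longrightarrow> finite (fvecs K I)"
  using bij_betw_finite[OF bij_betw_restrict_fvecs, of K I] by (simp add: finite_PiE)

lemma fsubspaceD:
  assumes "fsubspace K I W"
  shows fsubspace_subset: "W \<subseteq> fvecs K I" and fsubspace_zero: "0 \<in> W"
    and fsubspace_add: "x \<in> W \<Longrightarrow> y \<in> W \<Longrightarrow> x + y \<in> W"
    and fsubspace_scale: "c \<in> K \<Longrightarrow> x \<in> W \<Longrightarrow> (\<lambda>i. c * x i) \<in> W"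
  using assms unfolding fsubspace_def by blast+

lemma fsubspace_finite: "finite I \<Longrightarrow> finite K \<Longrightarrow> fsubspace K I W \<Longrightarrow> finite W"
  using finite_subset[OF fsubspace_subset finite_fvecs] by blast

lemma fsubspace_diff:
  assumes K: "subfield K" and W: "fsubspace K I W" and "x \<in> W" "y \<in> W"
  shows "x - y \<in> W"
proof -
  have "(\<lambda>i. (- 1) * y i) \<in> W"
    using assms by (intro fsubspace_scale[OF W]) (simp_all add: subfield_one subfield_uminus)
  moreover have "x - y = x + (\<lambda>i. (- 1) * y i)" by (simp add: fun_eq_iff)
  ultimately show ?thesis using fsubspace_add[OF W \<open>x \<in> W\<close>] by metis
qed

lemma fsubspace_fperp:
  assumes K: "subfield K"
  shows "fsubspace K I (fperp K I W)"
  unfolding fsubspace_def fperp_def fvecs_def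
  using K by (auto simp: subfield_zero subfield_add subfield_mult distrib_left sum.distrib
      mult.left_commute[of _ "c" for c] simp flip: sum_distrib_left)

lemma sum_fun_upd_notin: "a \<notin> I \<Longrightarrow> (\<Sum>i\<in>I. w i * (v(a := t)) i) = (\<Sum>i\<in>I. w i * v i)"
  by (intro sum.cong) auto

lemma card_fperp_insert_vanishing:
  fixes W :: "('i \<Rightarrow> 'b::field) set"
  assumes K: "subfield K" and I: "finite I" "a \<notin> I" and W: "W \<subseteq> fvecs K I"
  shows "card (fperp K (insert a I) W) = card (fperp K I W) * card K"
proof -
  have "w a = 0" if "w \<in> W" for w using W that I(2) by (auto simp: fvecs_def)
  then have insert_a: "(\<Sum>i\<in>insert a I. w i * u i) = (\<Sum>i\<in>I. w i * u i)"
    if "w \<in> W" for w u :: "'i \<Rightarrow> 'b"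
    using I that by simp
  have "bij_betw (\<lambda>(v, t). v(a := t)) (fperp K I W \<times> K) (fperp K (insert a I) W)"
  proof (rule bij_betw_byWitness[where f'="\<lambda>u. (u(a := 0), u a)"])
    show "(\<lambda>(v, t). v(a := t)) ` (fperp K I W \<times> K) \<subseteq> fperp K (insert a I) W"
      using I(2) by (auto simp: fperp_def fvecs_def insert_a sum_fun_upd_notin simp del: fun_upd_apply)
        (auto simp: fvecs_def)
    show "(\<lambda>u. (u(a := 0), u a)) ` fperp K (insert a I) W \<subseteq> fperp K I W \<times> K"
      using I(2) subfield_zero[OF K]
      by (auto simp: fperp_def insert_a sum_fun_upd_notin simp del: fun_upd_apply) (auto simp: fvecs_def)
  qed (use I(2) in \<open>auto simp: fperp_def fvecs_def fun_eq_iff\<close>)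
  then show ?thesis by (simp add: bij_betw_same_card[symmetric] card_cartesian_product)
qed

lemma fsubspace_vanishing_at:
  assumes "fsubspace K (insert a I) W"
  shows "fsubspace K I {w \<in> W. w a = 0}"
  using assms unfolding fsubspace_def fvecs_def by auto

lemma card_fsubspace_pivot:
  assumes K: "subfield K" and W: "fsubspace K I W" and w0: "w0 \<in> W" "w0 a = 1"
  shows "card W = card {w \<in> W. w a = 0} * card K"
proof -
  have "w0 \<in> fvecs K I" by (rule subsetD[OF fsubspace_subset[OF W] w0(1)])
  have "a \<in> I"
  proof (rule ccontr)
    assume "a \<notin> I"
    then have "w0 a = 0" using \<open>w0 \<in> fvecs K I\<close> unfolding fvecs_def by blast
    then show False using w0(2) by simp
  qed
  then have Wa: "w a \<in> K" if "w \<in> W" for w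
    using subsetD[OF fsubspace_subset[OF W] that] unfolding fvecs_def by blast
  have "bij_betw (\<lambda>(w', t). w' + (\<lambda>i. t * w0 i)) ({w \<in> W. w a = 0} \<times> K) W"
  proof (rule bij_betw_byWitness[where f'="\<lambda>w. (w - (\<lambda>i. w a * w0 i), w a)"])
    show "(\<lambda>(w', t). w' + (\<lambda>i. t * w0 i)) ` ({w \<in> W. w a = 0} \<times> K) \<subseteq> W"
    proof
      fix x assume "x \<in> (\<lambda>(w', t). w' + (\<lambda>i. t * w0 i)) ` ({w \<in> W. w a = 0} \<times> K)"
      then obtain w' t where "x = w' + (\<lambda>i. t * w0 i)" "w' \<in> W" "t \<in> K" by auto
      then show "x \<in> W" using fsubspace_add[OF W] fsubspace_scale[OF W _ w0(1)] by simp
    qed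
    show "(\<lambda>w. (w - (\<lambda>i. w a * w0 i), w a)) ` W \<subseteq> {w \<in> W. w a = 0} \<times> K"
      using fsubspace_diff[OF K W] fsubspace_scale[OF W Wa w0(1)] Wa w0(2) by auto
  qed (use w0 in \<open>auto simp: fun_eq_iff\<close>)
  then show ?thesis by (simp add: bij_betw_same_card[symmetric] card_cartesian_product)
qed

text \<open>Orthogonality to the pivot vector \<open>w0\<close> determines the \<open>a\<close>-coordinate, so
  \<open>fperp K (insert a I) W\<close> is a graph over \<open>fperp K I {w \<in> W. w a = 0}\<close>.\<close>

lemma fperp_pivot_extend:
  assumes K: "subfield K" and I: "finite I" "a \<notin> I" and W: "fsubspace K (insert a I) W"
    and w0: "w0 \<in> W" "w0 a = 1" and y: "y \<in> fperp K I {w \<in> W. w a = 0}"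
  shows "y(a := - (\<Sum>i\<in>I. w0 i * y i)) \<in> fperp K (insert a I) W"
proof -
  let ?s = "\<Sum>i\<in>I. w0 i * y i"
  have "?s \<in> K" using y w0 fsubspace_subset[OF W]
    by (intro subfield_sum[OF K] subfield_mult[OF K]) (auto simp: fperp_def fvecs_def)
  then have "y(a := - ?s) \<in> fvecs K (insert a I)"
    using y subfield_uminus[OF K] by (auto simp: fperp_def fvecs_def)
  moreover have "(\<Sum>i\<in>insert a I. w i * (y(a := - ?s)) i) = 0" if "w \<in> W" for w
  proof -
    have "w - (\<lambda>i. w a * w0 i) \<in> {w \<in> W. w a = 0}"
      using that w0 fsubspace_subset[OF W]
      by (auto simp: fvecs_def intro!: fsubspace_diff[OF K W] fsubspace_scale[OF W])
    then have "(\<Sum>i\<in>I. (w - (\<lambda>i. w a * w0 i)) i * y i) = 0" using y by (auto simp: fperp_def)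
    then have "(\<Sum>i\<in>I. w i * y i) = w a * ?s"
      by (simp add: left_diff_distrib sum_subtractf sum_distrib_left mult.assoc)
    then show ?thesis using I by (simp add: sum_fun_upd_notin del: fun_upd_apply) simp
  qed
  ultimately show ?thesis by (auto simp: fperp_def)
qed

lemma card_fperp_pivot:
  assumes K: "subfield K" and I: "finite I" "a \<notin> I" and W: "fsubspace K (insert a I) W"
    and w0: "w0 \<in> W" "w0 a = 1"
  shows "card (fperp K (insert a I) W) = card (fperp K I {w \<in> W. w a = 0})"
proof -
  define s where "s y = (\<Sum>i\<in>I. w0 i * y i)" for y
  have insert_a: "(\<Sum>i\<in>insert a I. w i * u i) = w a * u a + (\<Sum>i\<in>I. w i * u i)" for w u
    using I by simp
  have "bij_betw (\<lambda>y. y(a := - s y)) (fperp K I {w \<in> W. w a = 0}) (fperp K (insert a I) W)"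
  proof (rule bij_betw_byWitness[where f'="\<lambda>v. v(a := 0)"])
    show "\<forall>y\<in>fperp K I {w \<in> W. w a = 0}. (y(a := - s y))(a := 0) = y"
      using I(2) by (auto simp: fperp_def fvecs_def fun_eq_iff)
    show "\<forall>v\<in>fperp K (insert a I) W. (v(a := 0))(a := - s (v(a := 0))) = v"
    proof
      fix v assume "v \<in> fperp K (insert a I) W"
      then have "v a + s v = 0" using w0 insert_a[of w0 v] by (auto simp: fperp_def s_def)
      moreover have "s (v(a := 0)) = s v" unfolding s_def using I(2) by (rule sum_fun_upd_notin)
      ultimately show "(v(a := 0))(a := - s (v(a := 0))) = v" by (auto simp: fun_eq_iff add_eq_0_iff)
    qed
    show "(\<lambda>y. y(a := - s y)) ` fperp K I {w \<in> W. w a = 0} \<subseteq> fperp K (insert a I) W"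
      using fperp_pivot_extend[OF K I W w0] unfolding s_def by blast
    show "(\<lambda>v. v(a := 0)) ` fperp K (insert a I) W \<subseteq> fperp K I {w \<in> W. w a = 0}"
      using I(2) subfield_zero[OF K]
      by (auto simp: fperp_def insert_a sum_fun_upd_notin simp del: fun_upd_apply) (auto simp: fvecs_def)
  qed
  then show ?thesis by (simp add: bij_betw_same_card)
qed

theorem card_mult_card_fperp:
  assumes K: "subfield K" "finite K" and I: "finite I" and W: "fsubspace K I W"
  shows "card W * card (fperp K I W) = card K ^ card I"
  using I W
proof (induction I arbitrary: W rule: finite_induct)
  case empty
  then have "W = {0}" "fperp K {} W = {0}"
    using fsubspace_subset[OF empty.prems] fsubspace_zero[OF empty.prems]
    by (auto simp: fvecs_def fperp_def fun_eq_iff)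
  then show ?case by simp
next
  case (insert a I W)
  show ?case
  proof (cases "\<forall>w\<in>W. w a = 0")
    case True
    then have "{w \<in> W. w a = 0} = W" by blast
    then have "fsubspace K I W" using fsubspace_vanishing_at[OF insert.prems] by simp
    then have "card W * card (fperp K (insert a I) W) = card W * card (fperp K I W) * card K"
      using card_fperp_insert_vanishing[OF K(1) insert.hyps fsubspace_subset] by simp
    then show ?thesis using insert.IH \<open>fsubspace K I W\<close> insert.hyps by simp
  next
    case False
    then obtain w1 where w1: "w1 \<in> W" "w1 a \<noteq> 0" by blast
    define w0 where "w0 = (\<lambda>i. inverse (w1 a) * w1 i)"
    have "w1 a \<in> K" using w1 fsubspace_subset[OF insert.prems] by (auto simp: fvecs_def)
    then have w0: "w0 \<in> W" "w0 a = 1"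
      using w1 unfolding w0_def by (auto intro!: fsubspace_scale[OF insert.prems] subfield_inverse[OF K(1)])
    have "card W * card (fperp K (insert a I) W)
        = card K * (card {w \<in> W. w a = 0} * card (fperp K I {w \<in> W. w a = 0}))"
      using card_fsubspace_pivot[OF K(1) insert.prems w0] card_fperp_pivot[OF K(1) insert.hyps insert.prems w0]
      by simp
    then show ?thesis using insert.IH[OF fsubspace_vanishing_at[OF insert.prems]] insert.hyps by simp
  qed
qed

lemma fperp_fperp:
  assumes K: "subfield K" "finite K" and I: "finite I" and W: "fsubspace K I W"
  shows "fperp K I (fperp K I W) = W"
proof -
  have "W \<subseteq> fperp K I (fperp K I W)"
    using fsubspace_subset[OF W] by (auto simp: fperp_def mult.commute)
  moreover have "card (fperp K I (fperp K I W)) = card W"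
  proof -
    have P: "fsubspace K I (fperp K I W)" by (rule fsubspace_fperp[OF K(1)])
    have "card (fperp K I W) > 0"
      using fsubspace_zero[OF P] fsubspace_finite[OF I K(2) P] by (auto simp: card_gt_0_iff)
    then show ?thesis
      using card_mult_card_fperp[OF K I W] card_mult_card_fperp[OF K I P] by (metis mult.commute mult_left_cancel not_gr0)
  qed
  moreover have "finite (fperp K I (fperp K I W))"
    by (rule fsubspace_finite[OF I K(2) fsubspace_fperp[OF K(1)]])
  ultimately show ?thesis by (metis card_subset_eq)
qed

text \<open>Grassmann's formula \<open>dim (X + Y) + dim (X \<inter> Y) = dim X + dim Y\<close>, in multiplicative form:
  \<open>(x, y) \<mapsto> (x + y, x - r (x + y))\<close> is a bijection, for any choice \<open>r\<close> of an \<open>X\<close>-summand.\<close>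

lemma card_set_plus_mult_card_Int:
  fixes X Y :: "'a::ab_group_add set"
  assumes X: "finite X" "0 \<in> X" "\<And>x y. x \<in> X \<Longrightarrow> y \<in> X \<Longrightarrow> x - y \<in> X"
    and Y: "finite Y" "0 \<in> Y" "\<And>x y. x \<in> Y \<Longrightarrow> y \<in> Y \<Longrightarrow> x - y \<in> Y"
  shows "card (X + Y) * card (X \<inter> Y) = card X * card Y"
proof -
  define r where "r s = (SOME x. x \<in> X \<and> s - x \<in> Y)" for s
  have r: "r s \<in> X \<and> s - r s \<in> Y" if "s \<in> X + Y" for s
  proof -
    from that obtain x y where "s = x + y" "x \<in> X" "y \<in> Y" by (auto simp: set_plus_def)
    then have "\<exists>x. x \<in> X \<and> s - x \<in> Y" by (intro exI[of _ x]) simp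
    then show ?thesis unfolding r_def by (rule someI_ex)
  qed
  have X_add: "x + y \<in> X" if "x \<in> X" "y \<in> X" for x y
    using X(3)[OF that(1) X(3)[OF X(2) that(2)]] by simp
  have "bij_betw (\<lambda>(x, y). (x + y, x - r (x + y))) (X \<times> Y) ((X + Y) \<times> (X \<inter> Y))"
  proof (rule bij_betw_byWitness[where f'="\<lambda>(s, z). (r s + z, s - r s - z)"])
    show "(\<lambda>(x, y). (x + y, x - r (x + y))) ` (X \<times> Y) \<subseteq> (X + Y) \<times> (X \<inter> Y)"
    proof
      fix p assume "p \<in> (\<lambda>(x, y). (x + y, x - r (x + y))) ` (X \<times> Y)"
      then obtain x y where p: "p = (x + y, x - r (x + y))" and xy: "x \<in> X" "y \<in> Y" by auto
      then have s: "x + y \<in> X + Y" by auto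
      have "(x + y - r (x + y)) - y \<in> Y" using Y(3)[OF conjunct2[OF r[OF s]] xy(2)] .
      then show "p \<in> (X + Y) \<times> (X \<inter> Y)"
        using p s X(3)[OF xy(1)] r[OF s] by (simp add: algebra_simps)
    qed
    show "(\<lambda>(s, z). (r s + z, s - r s - z)) ` ((X + Y) \<times> (X \<inter> Y)) \<subseteq> X \<times> Y"
    proof
      fix p assume "p \<in> (\<lambda>(s, z). (r s + z, s - r s - z)) ` ((X + Y) \<times> (X \<inter> Y))"
      then obtain s z where p: "p = (r s + z, s - r s - z)" "s \<in> X + Y" "z \<in> X" "z \<in> Y" by auto
      then show "p \<in> X \<times> Y" using r[OF p(2)] X_add Y(3) by simp
    qed
  qed (simp_all add: split_beta algebra_simps)
  then have "card (X \<times> Y) = card ((X + Y) \<times> (X \<inter> Y))" by (rule bij_betw_same_card)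
  then show ?thesis by (simp add: card_cartesian_product)
qed

lemma fperp_set_plus:
  assumes "0 \<in> X" "0 \<in> Y"
  shows "fperp K I (X + Y) = fperp K I X \<inter> fperp K I Y"
proof
  show "fperp K I (X + Y) \<subseteq> fperp K I X \<inter> fperp K I Y"
    using assms set_plus_intro[of _ X 0 Y] set_plus_intro[of 0 X _ Y] by (fastforce simp: fperp_def)
  show "fperp K I X \<inter> fperp K I Y \<subseteq> fperp K I (X + Y)"
    by (auto simp: fperp_def set_plus_def distrib_right sum.distrib)
qed

lemma fsubspace_set_plus:
  assumes "fsubspace K I X" "fsubspace K I Y" "subfield K"
  shows "fsubspace K I (X + Y)"
  unfolding fsubspace_def
proof (intro conjI ballI)
  show "X + Y \<subseteq> fvecs K I"
    using fsubspace_subset[OF assms(1)] fsubspace_subset[OF assms(2)] subfield_add[OF assms(3)]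
    by (force simp: set_plus_def fvecs_def)
  show "0 \<in> X + Y"
    using set_plus_intro[OF fsubspace_zero[OF assms(1)] fsubspace_zero[OF assms(2)]] by simp
next
  fix u v assume "u \<in> X + Y" "v \<in> X + Y"
  then obtain x1 y1 x2 y2 where "u = x1 + y1" "v = x2 + y2" "x1 \<in> X" "y1 \<in> Y" "x2 \<in> X" "y2 \<in> Y"
    by (auto simp: set_plus_def)
  then show "u + v \<in> X + Y"
    using set_plus_intro[OF fsubspace_add[OF assms(1)] fsubspace_add[OF assms(2)], of x1 x2 y1 y2]
    by (simp add: add_ac)
next
  fix c u assume c: "c \<in> K" and "u \<in> X + Y"
  then obtain x y where "u = x + y" "x \<in> X" "y \<in> Y" by (auto simp: set_plus_def)
  then show "(\<lambda>i. c * u i) \<in> X + Y"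
    using set_plus_intro[OF fsubspace_scale[OF assms(1) c] fsubspace_scale[OF assms(2) c], of x y]
    by (simp add: distrib_left plus_fun_def)
qed

theorem card_fperp_Int:
  assumes K: "subfield K" "finite K" and I: "finite I"
    and X: "fsubspace K I X" and Y: "fsubspace K I Y"
  shows "card (fperp K I X \<inter> fperp K I Y) * card X * card Y = card K ^ card I * card (X \<inter> Y)"
proof -
  have "card (X + Y) * card (X \<inter> Y) = card X * card Y"
    by (rule card_set_plus_mult_card_Int)
      (use fsubspace_finite[OF I K(2)] X Y fsubspace_diff[OF K(1)] fsubspace_zero in auto)
  moreover have "card (X + Y) * card (fperp K I (X + Y)) = card K ^ card I"
    by (rule card_mult_card_fperp[OF K I fsubspace_set_plus[OF X Y K(1)]])
  moreover have "fperp K I (X + Y) = fperp K I X \<inter> fperp K I Y"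
    by (rule fperp_set_plus[OF fsubspace_zero[OF X] fsubspace_zero[OF Y]])
  ultimately show ?thesis by (metis mult.commute mult.left_commute)
qed

section \<open>Finite fields: Frobenius and trace\<close>

lemma subfield_power_card:
  assumes K: "subfield K" "finite K" and x: "x \<in> K"
  shows "x ^ card K = x"
proof (cases "x = 0")
  case True
  then show ?thesis using K subfield_zero[OF K(1)] by (auto simp: card_gt_0_iff)
next
  case False
  let ?K = "K - {0}"
  have "(\<Prod>y\<in>?K. x * y) = (\<Prod>y\<in>?K. y)"
    by (rule prod.reindex_bij_witness[of _ "\<lambda>y. inverse x * y" "\<lambda>y. x * y"])
      (use False x K(1) in \<open>auto intro: subfield_mult subfield_inverse\<close>)
  then have "x ^ card ?K = 1" using K(2) by (simp add: prod.distrib)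
  moreover have "card K = Suc (card ?K)" using K subfield_zero[OF K(1)] by (metis card_Suc_Diff1)
  ultimately show ?thesis by simp
qed

lemma subfield_power_card_power:
  assumes "subfield K" "finite K" "x \<in> K"
  shows "x ^ (card K ^ i) = x"
proof (induction i)
  case (Suc i)
  then show ?case by (simp add: power_Suc2 power_mult subfield_power_card[OF assms])
qed simp

lemma prime_subfield:
  assumes "finite (UNIV :: 'b::field set)"
  shows "subfield (range (of_nat :: nat \<Rightarrow> 'b))" and "card (range (of_nat :: nat \<Rightarrow> 'b)) = CHAR('b)"
proof -
  let ?P = "range (of_nat :: nat \<Rightarrow> 'b)"
  have C: "CHAR('b) > 0" using finite_imp_CHAR_pos[OF assms] .
  have P: "?P = of_nat ` {..<CHAR('b)}"
  proof (intro equalityI subsetI)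
    fix x assume "x \<in> ?P"
    then obtain n where "x = of_nat n" by auto
    then have "x = of_nat (n mod CHAR('b))" by (simp add: of_nat_eq_iff_cong_CHAR cong_def)
    then show "x \<in> of_nat ` {..<CHAR('b)}" using C by simp
  qed auto
  show "card ?P = CHAR('b)" unfolding P
    by (subst card_image) (auto intro!: inj_onI simp: of_nat_eq_iff_cong_CHAR cong_def)
  have uminus: "- of_nat n \<in> ?P" for n
  proof -
    have "of_nat n + (of_nat ((CHAR('b) - 1) * n) :: 'b) = of_nat (CHAR('b) * n)"
      using C by (simp flip: of_nat_add)
    then have "- of_nat n = (of_nat ((CHAR('b) - 1) * n) :: 'b)" by (simp add: neg_eq_iff_add_eq_0)
    then show ?thesis by (metis rangeI)
  qed
  have inverse: "inverse x \<in> ?P" if x: "x \<in> ?P" for x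
  proof (cases "x = 0")
    case False
    have "finite ?P" unfolding P by simp
    then have "(\<lambda>y. x * y) ` ?P = ?P"
      by (rule endo_inj_surj) (use x False in \<open>auto simp: inj_on_def simp flip: of_nat_mult\<close>)
    then obtain y where "y \<in> ?P" "x * y = 1" by (metis imageE of_nat_1 rangeI)
    then show ?thesis using False by (metis inverse_unique)
  qed (use x in simp)
  show "subfield ?P" unfolding subfield_def
    using uminus inverse by (auto simp flip: of_nat_add of_nat_mult intro: range_eqI[of _ _ 0] range_eqI[of _ _ 1])
qed

lemma card_subfield_CHAR_power:
  assumes fin: "finite (UNIV :: 'b::field set)" and K: "subfield (K :: 'b set)"
  obtains e where "card K = CHAR('b) ^ e"
proof -
  let ?P = "range (of_nat :: nat \<Rightarrow> 'b)"
  interpret subfield_module ?P "(*) :: 'b \<Rightarrow> 'b \<Rightarrow> 'b"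
    by unfold_locales (auto simp: prime_subfield[OF fin] algebra_simps intro: finite_subset[OF _ fin])
  have "of_nat n \<in> K" for n by (induction n) (auto intro: subfield_zero[OF K] subfield_add[OF K] subfield_one[OF K])
  then have "ksubspace ?P (*) K"
    unfolding ksubspace_def using subfield_zero[OF K] subfield_add[OF K] subfield_mult[OF K] by auto
  then have "card K = CHAR('b) ^ kdim ?P (*) K"
    using card_kdim finite_subset[OF _ fin] prime_subfield(2)[OF fin] by auto
  then show thesis by (rule that)
qed

lemma trace_sum:
  assumes "finite (UNIV :: 'b::field set)" "subfield (K :: 'b set)"
  shows "trace K m (sum f F) = (\<Sum>x\<in>F. trace K m (f x))"
proof -
  obtain e where "card K = CHAR('b) ^ e" using card_subfield_CHAR_power[OF assms] .
  then have "sum f F ^ (card K ^ i) = (\<Sum>x\<in>F. f x ^ (card K ^ i))" for i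
    by (intro freshmans_dream_sum'[where n = "e * i"])
      (simp_all add: power_mult prime_CHAR_semidom finite_imp_CHAR_pos assms(1))
  then show ?thesis unfolding trace_def by (simp add: sum.swap[of _ "{..<m}"])
qed

lemma trace_zero:
  assumes "finite (UNIV :: 'b::field set)" "subfield (K :: 'b set)"
  shows "trace K m 0 = 0"
  using trace_sum[OF assms, where F = "{}"] by simp

lemma trace_scale:
  assumes "finite (UNIV :: 'b::field set)" "subfield (K :: 'b set)" "a \<in> K"
  shows "trace K m (a * x) = a * trace K m x"
  using subfield_power_card_power[OF assms(2) finite_subset[OF _ assms(1)] assms(3)]
  by (simp add: trace_def power_mult_distrib sum_distrib_left)

section \<open>Matrix codes and their duals\<close>

text \<open>Matrices are turned into vectors indexed by \<open>{..<n} \<times> {..<m}\<close> via \<open>case_prod\<close>;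
  the dual of a matrix code is taken with respect to the trace form \<open>\<Sum>i j. M i j * N i j\<close>.\<close>

definition mats :: "'b::field set \<Rightarrow> nat \<Rightarrow> nat \<Rightarrow> (nat \<Rightarrow> nat \<Rightarrow> 'b) set" where
  "mats K n m = {M. case_prod M \<in> fvecs K ({..<n} \<times> {..<m})}"

definition msubspace :: "'b::field set \<Rightarrow> nat \<Rightarrow> nat \<Rightarrow> (nat \<Rightarrow> nat \<Rightarrow> 'b) set \<Rightarrow> bool" where
  "msubspace K n m D \<longleftrightarrow> fsubspace K ({..<n} \<times> {..<m}) (case_prod ` D)"

definition mat_dual :: "'b::field set \<Rightarrow> nat \<Rightarrow> nat \<Rightarrow> (nat \<Rightarrow> nat \<Rightarrow> 'b) set \<Rightarrow> (nat \<Rightarrow> nat \<Rightarrow> 'b) set" where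
  "mat_dual K n m D = {N. case_prod N \<in> fperp K ({..<n} \<times> {..<m}) (case_prod ` D)}"

lemma inj_case_prod: "inj case_prod"
  by (metis curry_case_prod injI)

lemma case_prod_image_vimage: "case_prod ` {N. case_prod N \<in> S} = S"
  using image_eqI[of _ case_prod "curry _"] by auto

lemma card_image_case_prod: "card (case_prod ` D) = card D"
  by (rule card_image[OF inj_on_subset[OF inj_case_prod subset_UNIV]])

lemma mats_iff: "M \<in> mats K n m \<longleftrightarrow> (\<forall>i<n. \<forall>j<m. M i j \<in> K) \<and> (\<forall>i j. \<not> (i < n \<and> j < m) \<longrightarrow> M i j = 0)"
  unfolding mats_def fvecs_def by auto

lemma case_prod_msc: "case_prod (msc c M) = (\<lambda>p. c * case_prod M p)"
  by (simp add: msc_def fun_eq_iff)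

lemma case_prod_add: "case_prod (M + N) = case_prod M + case_prod N"
  by (simp add: fun_eq_iff)

lemma case_prod_zero: "case_prod 0 = 0"
  by (simp add: fun_eq_iff)

lemma msubspace_iff: "msubspace K n m D \<longleftrightarrow> D \<subseteq> mats K n m \<and> ksubspace K msc D"
proof -
  note mem = inj_image_mem_iff[OF inj_case_prod]
  have "0 \<in> case_prod ` D \<longleftrightarrow> 0 \<in> D" using mem[of 0 D] by (simp only: case_prod_zero)
  moreover have "(\<forall>x\<in>case_prod ` D. \<forall>y\<in>case_prod ` D. x + y \<in> case_prod ` D) \<longleftrightarrow> (\<forall>x\<in>D. \<forall>y\<in>D. x + y \<in> D)"
    by (simp add: mem flip: case_prod_add)
  moreover have "(\<forall>c\<in>K. \<forall>x\<in>case_prod ` D. (\<lambda>p. c * x p) \<in> case_prod ` D) \<longleftrightarrow> (\<forall>c\<in>K. \<forall>x\<in>D. msc c x \<in> D)"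
    by (simp add: mem flip: case_prod_msc)
  ultimately show ?thesis
    unfolding msubspace_def fsubspace_def ksubspace_def mats_def by blast
qed

lemma sum_case_prod_mult:
  "(\<Sum>p\<in>{..<n} \<times> {..<m}. case_prod M p * case_prod N p) = (\<Sum>i<n. \<Sum>j<m. M i j * N i j)"
  by (simp add: sum.cartesian_product split_beta)

lemma mat_dual_iff:
  "N \<in> mat_dual K n m D \<longleftrightarrow> N \<in> mats K n m \<and> (\<forall>M\<in>D. (\<Sum>i<n. \<Sum>j<m. M i j * N i j) = 0)"
  unfolding mat_dual_def fperp_def mats_def by (simp add: sum_case_prod_mult)

lemma subfield_module_msc: "subfield K \<Longrightarrow> finite K \<Longrightarrow> subfield_module K msc"
  by unfold_locales (auto simp: msc_def fun_eq_iff algebra_simps)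

lemma subfield_module_vsc: "subfield K \<Longrightarrow> finite K \<Longrightarrow> subfield_module K vsc"
  by unfold_locales (auto simp: vsc_def fun_eq_iff algebra_simps)

context
  fixes K :: "'b::field set"
  assumes K: "subfield K" "finite K"
begin

lemma msubspace_finite: "msubspace K n m D \<Longrightarrow> finite D"
  unfolding msubspace_def
  by (metis finite_imageD fsubspace_finite[OF _ K(2)] finite_cartesian_product finite_lessThan
      inj_on_subset[OF inj_case_prod subset_UNIV])

lemma card_msubspace: "msubspace K n m D \<Longrightarrow> card D = card K ^ kdim K msc D"
  using subfield_module.card_kdim[OF subfield_module_msc[OF K]] msubspace_finite msubspace_iff
  by blast

lemma kdim_msubspace_unique: "msubspace K n m D \<Longrightarrow> card D = card K ^ k \<Longrightarrow> kdim K msc D = k"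
  using card_msubspace card_subfield_ge_2[OF K] by simp

lemma kdim_msubspace_eqI:
  "msubspace K n m X \<Longrightarrow> msubspace K n' m' Y \<Longrightarrow> card X = card Y \<Longrightarrow> kdim K msc X = kdim K msc Y"
  using card_msubspace kdim_msubspace_unique by metis

lemma msubspace_mat_dual: "msubspace K n m (mat_dual K n m D)"
  unfolding msubspace_def mat_dual_def case_prod_image_vimage by (rule fsubspace_fperp[OF K(1)])

lemma msubspace_Int: "msubspace K n m X \<Longrightarrow> msubspace K n m Y \<Longrightarrow> msubspace K n m (X \<inter> Y)"
  unfolding msubspace_iff ksubspace_def by blast

lemma kdim_mat_dual_Int:
  assumes X: "msubspace K n m X" and Y: "msubspace K n m Y"
  shows "kdim K msc (mat_dual K n m X \<inter> mat_dual K n m Y) + kdim K msc X + kdim K msc Y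
       = n * m + kdim K msc (X \<inter> Y)"
proof -
  have "case_prod ` (mat_dual K n m X \<inter> mat_dual K n m Y)
      = fperp K ({..<n} \<times> {..<m}) (case_prod ` X) \<inter> fperp K ({..<n} \<times> {..<m}) (case_prod ` Y)"
    unfolding image_Int[OF inj_case_prod] mat_dual_def case_prod_image_vimage ..
  then have "card (mat_dual K n m X \<inter> mat_dual K n m Y) * card X * card Y = card K ^ (n * m) * card (X \<inter> Y)"
    using card_fperp_Int[OF K _ X[unfolded msubspace_def] Y[unfolded msubspace_def]]
    by (metis card_image_case_prod card_cartesian_product card_lessThan finite_cartesian_product
        finite_lessThan image_Int[OF inj_case_prod])
  then have "card K ^ (kdim K msc (mat_dual K n m X \<inter> mat_dual K n m Y) + kdim K msc X + kdim K msc Y)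
      = card K ^ (n * m + kdim K msc (X \<inter> Y))"
    using card_msubspace[OF X] card_msubspace[OF Y] card_msubspace[OF msubspace_Int[OF X Y]]
      card_msubspace[OF msubspace_Int[OF msubspace_mat_dual msubspace_mat_dual]]
    by (simp add: power_add)
  then show ?thesis using card_subfield_ge_2[OF K] by simp
qed

lemma kdim_mat_dual:
  assumes X: "msubspace K n m X"
  shows "kdim K msc (mat_dual K n m X) + kdim K msc X = n * m"
proof -
  have "card X * card (mat_dual K n m X) = card K ^ (n * m)"
    using card_mult_card_fperp[OF K _ X[unfolded msubspace_def]]
    by (simp add: mat_dual_def card_cartesian_product card_image_case_prod[symmetric] case_prod_image_vimage)
  then have "card K ^ (kdim K msc (mat_dual K n m X) + kdim K msc X) = card K ^ (n * m)"
    using card_msubspace[OF X] card_msubspace[OF msubspace_mat_dual] by (simp add: power_add mult.commute)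
  then show ?thesis using card_subfield_ge_2[OF K] by simp
qed

end

definition mtranspose :: "(nat \<Rightarrow> nat \<Rightarrow> 'a) \<Rightarrow> nat \<Rightarrow> nat \<Rightarrow> 'a" where
  "mtranspose M = (\<lambda>i j. M j i)"

lemma mtranspose_mtranspose [simp]: "mtranspose (mtranspose M) = M"
  by (simp add: mtranspose_def)

lemma inj_mtranspose: "inj mtranspose"
  by (metis injI mtranspose_mtranspose)

lemma mtranspose_in_mats_iff: "mtranspose M \<in> mats K m n \<longleftrightarrow> M \<in> mats K n m"
  unfolding mats_iff mtranspose_def by blast

lemma mtranspose_add: "mtranspose (M + N) = mtranspose M + mtranspose N"
  and mtranspose_msc: "mtranspose (msc c M) = msc c (mtranspose M)"
  and mtranspose_zero: "mtranspose 0 = 0"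
  by (simp_all add: mtranspose_def msc_def fun_eq_iff)

lemma msubspace_mtranspose:
  assumes "msubspace K n m D"
  shows "msubspace K m n (mtranspose ` D)"
proof -
  have D: "D \<subseteq> mats K n m" "0 \<in> D" "\<forall>x\<in>D. \<forall>y\<in>D. x + y \<in> D" "\<forall>c\<in>K. \<forall>x\<in>D. msc c x \<in> D"
    using assms unfolding msubspace_iff ksubspace_def by blast+
  show ?thesis unfolding msubspace_iff ksubspace_def
  proof (intro conjI ballI)
    show "mtranspose ` D \<subseteq> mats K m n"
      unfolding image_subset_iff mtranspose_in_mats_iff using D(1) by blast
    show "0 \<in> mtranspose ` D" by (rule image_eqI[where f = mtranspose, OF mtranspose_zero[symmetric] D(2)])
    show "x + y \<in> mtranspose ` D" if "x \<in> mtranspose ` D" "y \<in> mtranspose ` D" for x y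
      using that D(3) by (auto simp flip: mtranspose_add)
    show "msc c x \<in> mtranspose ` D" if "c \<in> K" "x \<in> mtranspose ` D" for c x
      using that D(4) by (auto simp flip: mtranspose_msc)
  qed
qed

lemma mtranspose_image_iff: "N \<in> mtranspose ` X \<longleftrightarrow> mtranspose N \<in> X"
  by (metis image_iff mtranspose_mtranspose)

lemma mat_dual_mtranspose:
  fixes D :: "(nat \<Rightarrow> nat \<Rightarrow> 'b::field) set"
  shows "mat_dual K m n (mtranspose ` D) = mtranspose ` mat_dual K n m D"
proof -
  have swap: "(\<Sum>i<m. \<Sum>j<n. mtranspose M i j * N i j) = (\<Sum>i<n. \<Sum>j<m. M i j * mtranspose N i j)"
    for M N :: "nat \<Rightarrow> nat \<Rightarrow> 'b"
    unfolding mtranspose_def by (rule sum.swap)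
  have "N \<in> mat_dual K m n (mtranspose ` D) \<longleftrightarrow> mtranspose N \<in> mat_dual K n m D" for N
    unfolding mat_dual_iff using mtranspose_in_mats_iff[of "mtranspose N" K m n] by (simp add: swap)
  then show ?thesis unfolding set_eq_iff mtranspose_image_iff by blast
qed

section \<open>The column and row q-polymatroids of a matrix code\<close>

lemma vecs_eq_fvecs: "vecs K N = fvecs K {..<N}"
  unfolding vecs_def fvecs_def by auto

lemma perp_eq_fperp: "perp K N A = fperp K {..<N} A"
  unfolding perp_def fperp_def vecs_eq_fvecs dotp_def by simp

lemma fsubspace_lessThan_iff: "fsubspace K {..<N} A \<longleftrightarrow> A \<subseteq> vecs K N \<and> ksubspace K vsc A"
  unfolding fsubspace_def ksubspace_def vecs_eq_fvecs vsc_def by auto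

context
  fixes K :: "'b::field set"
  assumes K: "subfield K" "finite K"
begin

lemma fsubspace_perp: "fsubspace K {..<N} (perp K N J)"
  unfolding perp_eq_fperp by (rule fsubspace_fperp[OF K(1)])

lemma perp_perp: "fsubspace K {..<N} A \<Longrightarrow> perp K N (perp K N A) = A"
  unfolding perp_eq_fperp by (rule fperp_fperp[OF K]) simp_all

lemma perp_vecs: "perp K N (vecs K N) = {0}"
proof -
  have "fsubspace K {..<N} {0}"
    using subfield_zero[OF K(1)] by (auto simp: fsubspace_def fvecs_def zero_fun_def)
  moreover have "perp K N {0} = vecs K N" by (auto simp: perp_def dotp_def)
  ultimately show ?thesis using perp_perp by metis
qed

lemma card_fsubspace_lessThan:
  assumes "fsubspace K {..<N} A"
  shows "card A = card K ^ kdim K vsc A"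
  using subfield_module.card_kdim[OF subfield_module_vsc[OF K]] fsubspace_finite[OF _ K(2) assms]
    assms[unfolded fsubspace_lessThan_iff] by simp

lemma restr_c_iff:
  assumes "fsubspace K {..<n} U"
  shows "restr_c K m D U = {M \<in> D. \<forall>j<m. (\<lambda>i. M i j) \<in> U}"
proof -
  have "colsp K m M \<subseteq> U \<longleftrightarrow> (\<forall>j<m. (\<lambda>i. M i j) \<in> U)" for M
    unfolding colsp_def subfield_module.kspan_subset_iff[OF subfield_module_vsc[OF K]
        conjunct2[OF assms[unfolded fsubspace_lessThan_iff]]] by blast
  then show ?thesis unfolding restr_c_def by simp
qed

lemma restr_r_iff:
  assumes "fsubspace K {..<m} L"
  shows "restr_r K n D L = {M \<in> D. \<forall>i<n. (\<lambda>j. M i j) \<in> L}"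
proof -
  have "rowsp K n M \<subseteq> L \<longleftrightarrow> (\<forall>i<n. (\<lambda>j. M i j) \<in> L)" for M
    unfolding rowsp_def subfield_module.kspan_subset_iff[OF subfield_module_vsc[OF K]
        conjunct2[OF assms[unfolded fsubspace_lessThan_iff]]] by blast
  then show ?thesis unfolding restr_r_def by simp
qed

lemma restr_c_mats_Int: "D \<subseteq> mats K n m \<Longrightarrow> restr_c K m D U = D \<inter> restr_c K m (mats K n m) U"
  unfolding restr_c_def by blast

lemma msubspace_restr_c_mats:
  assumes U: "fsubspace K {..<n} U"
  shows "msubspace K n m (restr_c K m (mats K n m) U)"
  unfolding msubspace_iff ksubspace_def restr_c_iff[OF U]
proof (intro conjI ballI)
  show "0 \<in> {M \<in> mats K n m. \<forall>j<m. (\<lambda>i. M i j) \<in> U}"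
    using fsubspace_zero[OF U] subfield_zero[OF K(1)] by (simp add: mats_iff zero_fun_def)
next
  fix M N assume M: "M \<in> {M \<in> mats K n m. \<forall>j<m. (\<lambda>i. M i j) \<in> U}"
    and N: "N \<in> {M \<in> mats K n m. \<forall>j<m. (\<lambda>i. M i j) \<in> U}"
  have "M + N \<in> mats K n m" using M N subfield_add[OF K(1)] by (simp add: mats_iff)
  moreover have "(\<lambda>i. (M + N) i j) \<in> U" if "j < m" for j
    using fsubspace_add[OF U, of "\<lambda>i. M i j" "\<lambda>i. N i j"] M N that by (simp add: plus_fun_def)
  ultimately show "M + N \<in> {M \<in> mats K n m. \<forall>j<m. (\<lambda>i. M i j) \<in> U}" by blast
next
  fix c M assume c: "c \<in> K" and M: "M \<in> {M \<in> mats K n m. \<forall>j<m. (\<lambda>i. M i j) \<in> U}"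
  have "msc c M \<in> mats K n m" using M c subfield_mult[OF K(1)] by (simp add: mats_iff msc_def)
  moreover have "(\<lambda>i. msc c M i j) \<in> U" if "j < m" for j
    using fsubspace_scale[OF U c, of "\<lambda>i. M i j"] M that by (simp add: msc_def)
  ultimately show "msc c M \<in> {M \<in> mats K n m. \<forall>j<m. (\<lambda>i. M i j) \<in> U}" by blast
qed (rule Collect_restrict)

lemma card_restr_c_mats:
  assumes U: "fsubspace K {..<n} U"
  shows "card (restr_c K m (mats K n m) U) = card U ^ m"
proof -
  let ?cols = "\<lambda>M. \<lambda>j\<in>{..<m}. (\<lambda>i. M i j)" and ?mat = "\<lambda>f i j. if j < m then f j i else 0"
  have "bij_betw ?cols (restr_c K m (mats K n m) U) ({..<m} \<rightarrow>\<^sub>E U)"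
  proof (rule bij_betw_byWitness[where f' = ?mat])
    show "?mat ` ({..<m} \<rightarrow>\<^sub>E U) \<subseteq> restr_c K m (mats K n m) U"
    proof
      fix M assume "M \<in> ?mat ` ({..<m} \<rightarrow>\<^sub>E U)"
      then obtain f where M: "M = ?mat f" and f: "f \<in> {..<m} \<rightarrow>\<^sub>E U" by blast
      have "f j \<in> fvecs K {..<n}" if "j < m" for j using f that fsubspace_subset[OF U] by auto
      then have "M \<in> mats K n m" unfolding M mats_iff fvecs_def by auto
      moreover have "(\<lambda>i. M i j) \<in> U" if "j < m" for j using f that by (auto simp: M)
      ultimately show "M \<in> restr_c K m (mats K n m) U" by (simp add: restr_c_iff[OF U])
    qed
    show "\<forall>M\<in>restr_c K m (mats K n m) U. ?mat (?cols M) = M"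
      by (auto simp: restr_c_iff[OF U] mats_iff fun_eq_iff)
    show "\<forall>f\<in>{..<m} \<rightarrow>\<^sub>E U. ?cols (?mat f) = f"
      by (auto simp: PiE_def extensional_def fun_eq_iff)
    show "?cols ` restr_c K m (mats K n m) U \<subseteq> {..<m} \<rightarrow>\<^sub>E U"
      by (auto simp: restr_c_iff[OF U])
  qed
  then show ?thesis by (simp add: bij_betw_same_card card_funcsetE)
qed

lemma kdim_restr_c_mats:
  assumes U: "fsubspace K {..<n} U"
  shows "kdim K msc (restr_c K m (mats K n m) U) = m * kdim K vsc U"
  by (rule kdim_msubspace_unique[OF K msubspace_restr_c_mats[OF U]])
    (simp add: card_restr_c_mats[OF U] card_fsubspace_lessThan[OF U] mult.commute flip: power_mult)

lemma msubspace_restr_c: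
  assumes D: "msubspace K n m D" and U: "fsubspace K {..<n} U"
  shows "msubspace K n m (restr_c K m D U)"
proof -
  have "restr_c K m D U = D \<inter> restr_c K m (mats K n m) U"
    using D unfolding msubspace_iff by (intro restr_c_mats_Int) blast
  then show ?thesis using msubspace_Int[OF K D msubspace_restr_c_mats[OF U]] by simp
qed

lemma kdim_fsubspace_eqI:
  assumes "fsubspace K {..<N} A" "fsubspace K {..<N'} B" "card A = card B"
  shows "kdim K vsc A = kdim K vsc B"
  using assms(3) card_subfield_ge_2[OF K]
  unfolding card_fsubspace_lessThan[OF assms(1)] card_fsubspace_lessThan[OF assms(2)] by simp

lemma mat_dual_restr_c_mats:
  assumes U: "fsubspace K {..<n} U"
  shows "mat_dual K n m (restr_c K m (mats K n m) (perp K n U)) = restr_c K m (mats K n m) U"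
proof -
  let ?C = "\<lambda>V. restr_c K m (mats K n m) V"
  have PU: "fsubspace K {..<n} (perp K n U)" by (rule fsubspace_perp)
  have "?C U \<subseteq> mat_dual K n m (?C (perp K n U))"
  proof
    fix M assume M: "M \<in> ?C U"
    have "(\<Sum>i<n. \<Sum>j<m. N i j * M i j) = 0" if N: "N \<in> ?C (perp K n U)" for N
    proof -
      have "(\<Sum>i<n. N i j * M i j) = 0" if "j < m" for j
      proof -
        have "(\<lambda>i. M i j) \<in> U" "(\<lambda>i. N i j) \<in> perp K n U"
          using M N that unfolding restr_c_iff[OF U] restr_c_iff[OF PU] by blast+
        then show ?thesis by (auto simp: perp_def dotp_def mult.commute)
      qed
      then show ?thesis by (subst sum.swap) simp
    qed
    then show "M \<in> mat_dual K n m (?C (perp K n U))"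
      using M by (simp add: mat_dual_iff restr_c_def)
  qed
  moreover have "card (mat_dual K n m (?C (perp K n U))) = card (?C U)"
  proof -
    have "card (?C (perp K n U)) * card (mat_dual K n m (?C (perp K n U))) = card K ^ (n * m)"
      using kdim_mat_dual[OF K msubspace_restr_c_mats[OF PU]] card_msubspace[OF K]
        msubspace_restr_c_mats[OF PU] msubspace_mat_dual[OF K]
      by (metis add.commute power_add)
    moreover have "card U * card (perp K n U) = card K ^ n"
      using card_mult_card_fperp[OF K _ U] by (simp add: perp_eq_fperp)
    ultimately have "card (perp K n U) ^ m * card (mat_dual K n m (?C (perp K n U)))
        = card (perp K n U) ^ m * card U ^ m"
      by (metis card_restr_c_mats[OF PU] mult.commute power_mult power_mult_distrib)
    moreover have "card (perp K n U) > 0"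
      using fsubspace_zero[OF PU] fsubspace_finite[OF _ K(2) PU] by (auto simp: card_gt_0_iff)
    ultimately show ?thesis by (simp add: card_restr_c_mats[OF U])
  qed
  moreover have "finite (mat_dual K n m (?C (perp K n U)))"
    by (rule msubspace_finite[OF K msubspace_mat_dual[OF K]])
  ultimately show ?thesis by (metis card_subset_eq)
qed

lemma kdim_restr_c_perp_vecs:
  assumes D: "msubspace K n m D"
  shows "kdim K msc (restr_c K m D (perp K n (vecs K n))) = 0"
proof -
  have Z: "fsubspace K {..<n} {0}"
    using subfield_zero[OF K(1)] by (auto simp: fsubspace_def fvecs_def zero_fun_def)
  have "restr_c K m D {0} = {0}"
  proof
    show "restr_c K m D {0} \<subseteq> {0}"
    proof
      fix M assume "M \<in> restr_c K m D {0}"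
      then have M: "M \<in> mats K n m" "\<forall>j<m. (\<lambda>i. M i j) = 0"
        using D unfolding restr_c_iff[OF Z] msubspace_iff by blast+
      have "M i j = 0" for i j
        using M fun_cong[of "\<lambda>i. M i j" 0 i] by (cases "j < m") (auto simp: mats_iff)
      then show "M \<in> {0}" by (simp add: fun_eq_iff)
    qed
    show "{0} \<subseteq> restr_c K m D {0}"
      using D unfolding restr_c_iff[OF Z] msubspace_iff ksubspace_def by (simp add: zero_fun_def)
  qed
  then show ?thesis unfolding perp_vecs
    using kdim_msubspace_unique[OF K msubspace_Int[OF K D msubspace_restr_c_mats[OF Z]]]
    by (simp add: restr_c_mats_Int[of D n m] D[unfolded msubspace_iff])
qed

lemma pdual_rho_c:
  assumes D: "msubspace K n m D" and A: "fsubspace K {..<n} A"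
  shows "pdual K n (rho_c K n m D) A = real (kdim K vsc A) - real (kdim K msc (restr_c K m D A)) / real m"
  unfolding pdual_def rho_c_def kdim_restr_c_perp_vecs[OF D] perp_perp[OF A] by (simp add: diff_divide_distrib)

theorem rho_c_mat_dual:
  assumes D: "msubspace K n m D" and m: "m > 0" and A: "fsubspace K {..<n} A"
  shows "rho_c K n m (mat_dual K n m D) A = pdual K n (rho_c K n m D) A"
proof -
  let ?Y = "restr_c K m (mats K n m) A"
  have Y: "msubspace K n m ?Y" by (rule msubspace_restr_c_mats[OF A])
  have "restr_c K m (mat_dual K n m D) (perp K n A) = mat_dual K n m D \<inter> mat_dual K n m ?Y"
    using restr_c_mats_Int[of "mat_dual K n m D" n m] msubspace_mat_dual[OF K]
      mat_dual_restr_c_mats[OF fsubspace_perp[of n A], of m]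
    by (simp add: msubspace_iff perp_perp[OF A])
  moreover have "D \<inter> ?Y = restr_c K m D A"
    using restr_c_mats_Int[of D n m A] D by (simp add: msubspace_iff)
  ultimately have "kdim K msc (restr_c K m (mat_dual K n m D) (perp K n A)) + kdim K msc D + m * kdim K vsc A
      = n * m + kdim K msc (restr_c K m D A)"
    using kdim_mat_dual_Int[OF K D Y] kdim_restr_c_mats[OF A] by simp
  then show ?thesis
    using kdim_mat_dual[OF K D] m unfolding pdual_rho_c[OF D A] rho_c_def
    by (simp add: field_simps flip: of_nat_add of_nat_mult)
qed

text \<open>The row q-polymatroid is the column q-polymatroid of the transposed code.\<close>

lemma restr_r_eq_restr_c_mtranspose:
  assumes L: "fsubspace K {..<m} L"
  shows "restr_r K n D L = mtranspose ` restr_c K n (mtranspose ` D) L"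
  unfolding restr_r_iff[OF L] restr_c_iff[OF L] by (force simp: mtranspose_def)

lemma msubspace_restr_r:
  assumes D: "msubspace K n m D" and L: "fsubspace K {..<m} L"
  shows "msubspace K n m (restr_r K n D L)"
  unfolding restr_r_eq_restr_c_mtranspose[OF L]
  using msubspace_mtranspose[OF msubspace_restr_c[OF msubspace_mtranspose[OF D] L]] .

lemma kdim_restr_r_eq_restr_c_mtranspose:
  assumes D: "msubspace K n m D" and L: "fsubspace K {..<m} L"
  shows "kdim K msc (restr_r K n D L) = kdim K msc (restr_c K n (mtranspose ` D) L)"
  using msubspace_restr_r[OF D L] msubspace_restr_c[OF msubspace_mtranspose[OF D] L]
  unfolding restr_r_eq_restr_c_mtranspose[OF L]
  by (rule kdim_msubspace_eqI[OF K]) (simp add: card_image[OF inj_on_subset[OF inj_mtranspose subset_UNIV]])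

lemma rho_r_eq_rho_c_mtranspose:
  assumes D: "msubspace K n m D"
  shows "rho_r K n m D = rho_c K m n (mtranspose ` D)"
proof
  fix J
  have "kdim K msc D = kdim K msc (mtranspose ` D)"
    by (rule kdim_msubspace_eqI[OF K D msubspace_mtranspose[OF D]])
      (simp add: card_image[OF inj_on_subset[OF inj_mtranspose subset_UNIV]])
  then show "rho_r K n m D J = rho_c K m n (mtranspose ` D) J"
    unfolding rho_r_def rho_c_def kdim_restr_r_eq_restr_c_mtranspose[OF D fsubspace_perp] by simp
qed

lemma pdual_rho_r:
  assumes D: "msubspace K n m D" and A: "fsubspace K {..<m} A"
  shows "pdual K m (rho_r K n m D) A = real (kdim K vsc A) - real (kdim K msc (restr_r K n D A)) / real n"
  unfolding rho_r_eq_rho_c_mtranspose[OF D] pdual_rho_c[OF msubspace_mtranspose[OF D] A]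
    kdim_restr_r_eq_restr_c_mtranspose[OF D A] ..

theorem rho_r_mat_dual:
  assumes D: "msubspace K n m D" and n: "n > 0" and A: "fsubspace K {..<m} A"
  shows "rho_r K n m (mat_dual K n m D) A = pdual K m (rho_r K n m D) A"
  unfolding rho_r_eq_rho_c_mtranspose[OF D] rho_r_eq_rho_c_mtranspose[OF msubspace_mat_dual[OF K]]
    mat_dual_mtranspose[symmetric]
  by (rule rho_c_mat_dual[OF msubspace_mtranspose[OF D] n A])

end

section \<open>Coordinates with respect to a basis of the extension field\<close>

locale field_basis =
  fixes K :: "'b::field set" and m :: nat and h :: "nat \<Rightarrow> 'b"
  assumes subfield: "subfield K" and basis: "is_basis K m h"
begin

lemma coord_unique:
  assumes "c \<in> vecs K m" "x = (\<Sum>j<m. c j * h j)" "d \<in> vecs K m" "x = (\<Sum>j<m. d j * h j)"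
  shows "c = d"
proof
  fix j
  have "(\<Sum>j<m. (c j - d j) * h j) = 0"
    using assms(2,4) by (simp add: left_diff_distrib sum_subtractf)
  moreover have "\<forall>j<m. c j - d j \<in> K" using assms(1,3) subfield_diff[OF subfield] by (auto simp: vecs_def)
  ultimately show "c j = d j"
    using basis assms(1,3) unfolding is_basis_def vecs_def by (cases "j < m") auto
qed

lemma coord_spec: "coord K m h x \<in> vecs K m \<and> x = (\<Sum>j<m. coord K m h x j * h j)"
proof -
  obtain c where c: "\<forall>j<m. c j \<in> K" "x = (\<Sum>j<m. c j * h j)" using basis unfolding is_basis_def by blast
  let ?c = "\<lambda>j. if j < m then c j else 0"
  have c': "?c \<in> vecs K m \<and> x = (\<Sum>j<m. ?c j * h j)" using c by (auto simp: vecs_def)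
  have "(THE c. c \<in> vecs K m \<and> x = (\<Sum>j<m. c j * h j)) \<in> vecs K m \<and>
      x = (\<Sum>j<m. (THE c. c \<in> vecs K m \<and> x = (\<Sum>j<m. c j * h j)) j * h j)"
    by (rule theI[of _ ?c]) (use c' coord_unique in blast)+
  moreover have "(\<lambda>c. c \<in> vecs K m \<and> x = (\<Sum>j<m. c j * h j))
      = (\<lambda>c. (\<forall>j<m. c j \<in> K) \<and> (\<forall>j\<ge>m. c j = 0) \<and> x = (\<Sum>j<m. c j * h j))"
    by (auto simp: vecs_def fun_eq_iff)
  ultimately show ?thesis unfolding coord_def by simp
qed

lemma coord_in_vecs: "coord K m h x \<in> vecs K m"
  and sum_coord: "(\<Sum>j<m. coord K m h x j * h j) = x"
  using coord_spec by auto

lemma coord_in_subfield: "coord K m h x j \<in> K"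
  using coord_in_vecs subfield_zero[OF subfield] by (cases "j < m") (auto simp: vecs_def)

lemma coord_sum: "c \<in> vecs K m \<Longrightarrow> coord K m h (\<Sum>j<m. c j * h j) = c"
  using coord_unique[OF coord_in_vecs sum_coord[symmetric]] by blast

lemma coord_inj: "coord K m h x = coord K m h y \<Longrightarrow> x = y"
  by (metis sum_coord)

lemma coord_linear:
  assumes "a \<in> K"
  shows "coord K m h (a * x + y) = (\<lambda>j. a * coord K m h x j + coord K m h y j)"
proof -
  have "(\<lambda>j. a * coord K m h x j + coord K m h y j) \<in> vecs K m"
    using coord_in_vecs[of x] coord_in_vecs[of y] assms subfield_add[OF subfield] subfield_mult[OF subfield]
    by (auto simp: vecs_def)
  moreover have "a * x + y = (\<Sum>j<m. (a * coord K m h x j + coord K m h y j) * h j)"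
    by (simp add: distrib_right sum.distrib mult.assoc sum_coord flip: sum_distrib_left)
  ultimately show ?thesis by (metis coord_sum)
qed

lemma coord_add: "coord K m h (x + y) = (\<lambda>j. coord K m h x j + coord K m h y j)"
  using coord_linear[OF subfield_one[OF subfield], of x y] by simp

lemma coord_zero: "coord K m h 0 = 0"
  using coord_sum[of 0] subfield_zero[OF subfield] by (simp add: vecs_def zero_fun_def)

lemma coord_mult: "a \<in> K \<Longrightarrow> coord K m h (a * x) = (\<lambda>j. a * coord K m h x j)"
  using coord_linear[of a x 0] by (simp add: coord_zero)

lemma card_UNIV_eq: "card (UNIV :: 'b set) = card K ^ m"
proof -
  have "bij_betw (coord K m h) UNIV (vecs K m)"
    by (rule bij_betw_byWitness[where f' = "\<lambda>c. \<Sum>j<m. c j * h j"]) (auto simp: sum_coord coord_sum coord_in_vecs)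
  then show ?thesis using card_fvecs[of "{..<m}" K] by (simp add: bij_betw_same_card vecs_eq_fvecs)
qed

end

context field_basis
begin

lemma gmat_in_mats: "gmat K n m h v \<in> mats K n m"
  unfolding mats_iff gmat_def using coord_in_subfield coord_in_vecs by (auto simp: vecs_def)

lemma gmat_row: "i < n \<Longrightarrow> (\<lambda>j. gmat K n m h v i j) = coord K m h (v i)"
  by (simp add: gmat_def)

lemma inj_on_gmat: "inj_on (gmat K n m h) (vecs UNIV n)"
proof (rule inj_onI)
  fix v w assume "v \<in> vecs UNIV n" "w \<in> vecs UNIV n" "gmat K n m h v = gmat K n m h w"
  then have "v i = w i" for i
    using coord_inj[of "v i" "w i"] gmat_row[where i = i and v = v and n = n] gmat_row[where i = i and v = w and n = n] by (cases "i < n") (auto simp: vecs_def)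
  then show "v = w" by blast
qed

lemma gmat_add: "gmat K n m h (v + w) = gmat K n m h v + gmat K n m h w"
  and gmat_vsc: "a \<in> K \<Longrightarrow> gmat K n m h (vsc a v) = msc a (gmat K n m h v)"
  and gmat_zero: "gmat K n m h 0 = 0"
  by (simp_all add: gmat_def coord_add coord_mult coord_zero vsc_def msc_def fun_eq_iff)

lemma msubspace_gimg:
  assumes X: "ksubspace K vsc X"
  shows "msubspace K n m (gimg K n m h X)"
  unfolding msubspace_iff ksubspace_def gimg_def
proof (intro conjI ballI)
  show "gmat K n m h ` X \<subseteq> mats K n m" using gmat_in_mats by blast
  show "0 \<in> gmat K n m h ` X"
    using X unfolding ksubspace_def by (metis gmat_zero image_eqI)
  show "x + y \<in> gmat K n m h ` X" if xy: "x \<in> gmat K n m h ` X" "y \<in> gmat K n m h ` X" for x y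
  proof -
    obtain v w where "x = gmat K n m h v" "y = gmat K n m h w" "v \<in> X" "w \<in> X" using xy by blast
    then show ?thesis using X unfolding ksubspace_def by (simp add: imageI flip: gmat_add)
  qed
  show "msc c x \<in> gmat K n m h ` X" if c: "c \<in> K" and x: "x \<in> gmat K n m h ` X" for c x
  proof -
    obtain v where "x = gmat K n m h v" "v \<in> X" using x by blast
    then show ?thesis using X c unfolding ksubspace_def by (simp add: imageI flip: gmat_vsc)
  qed
qed

lemma card_gimg: "X \<subseteq> vecs UNIV n \<Longrightarrow> card (gimg K n m h X) = card X"
  unfolding gimg_def by (rule card_image[OF inj_on_subset[OF inj_on_gmat]])

lemma restr_r_gimg:
  assumes "finite K" "fsubspace K {..<m} L"
  shows "restr_r K n (gimg K n m h X) L = gmat K n m h ` {v \<in> X. \<forall>i<n. coord K m h (v i) \<in> L}"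
  unfolding restr_r_iff[OF subfield assms] gimg_def using gmat_row by auto

text \<open>Whether the columns of \<open>\<Gamma>(v)\<close> lie in \<open>U\<close> does not depend on the basis: expanding
  \<open>\<langle>w, v\<rangle>\<close> in the basis shows it is equivalent to \<open>v \<perp> U\<^sup>\<perp>\<close>.\<close>

lemma gmat_cols_in_iff:
  assumes K: "finite K" and U: "fsubspace K {..<n} U" and v: "v \<in> vecs UNIV n"
  shows "(\<forall>j<m. (\<lambda>i. gmat K n m h v i j) \<in> U) \<longleftrightarrow> (\<forall>w\<in>perp K n U. dotp n w v = 0)"
proof -
  let ?a = "\<lambda>w j. \<Sum>i<n. w i * coord K m h (v i) j"
  have dot: "dotp n w v = (\<Sum>j<m. ?a w j * h j)" for w
    unfolding dotp_def
    by (subst (1) sum_coord[symmetric]) (simp add: sum_distrib_left sum_distrib_right mult_ac sum.swap[of _ "{..<n}"])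
  have a_in: "\<forall>j<m. ?a w j \<in> K" if "w \<in> vecs K n" for w
    using that by (auto simp: vecs_def intro!: subfield_sum[OF subfield] subfield_mult[OF subfield] coord_in_subfield)
  have col: "(\<lambda>i. gmat K n m h v i j) \<in> vecs K n" for j
    using coord_in_subfield subfield_zero[OF subfield] by (auto simp: vecs_def gmat_def)
  have "(\<lambda>i. gmat K n m h v i j) \<in> U \<longleftrightarrow> (\<forall>w\<in>perp K n U. ?a w j = 0)" for j
  proof -
    have "(\<lambda>i. gmat K n m h v i j) \<in> U \<longleftrightarrow> (\<lambda>i. gmat K n m h v i j) \<in> perp K n (perp K n U)"
      by (simp add: perp_perp[OF subfield K U])
    also have "\<dots> \<longleftrightarrow> (\<forall>w\<in>perp K n U. ?a w j = 0)"
      using col by (simp add: perp_def dotp_def gmat_def)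
    finally show ?thesis .
  qed
  moreover have "(\<forall>j<m. \<forall>w\<in>perp K n U. ?a w j = 0) \<longleftrightarrow> (\<forall>w\<in>perp K n U. dotp n w v = 0)"
  proof
    assume "\<forall>w\<in>perp K n U. dotp n w v = 0"
    show "\<forall>j<m. \<forall>w\<in>perp K n U. ?a w j = 0"
    proof (intro allI impI ballI)
      fix j w assume "j < m" "w \<in> perp K n U"
      moreover have "(\<Sum>j<m. ?a w j * h j) = 0" using \<open>\<forall>w\<in>perp K n U. dotp n w v = 0\<close> calculation dot by simp
      moreover have "\<forall>j<m. ?a w j \<in> K" using a_in calculation by (simp add: perp_def)
      ultimately show "?a w j = 0"
        using conjunct1[OF basis[unfolded is_basis_def], rule_format, of "?a w"] by blast
    qed
  qed (simp add: dot)
  ultimately show ?thesis by blast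
qed

lemma restr_c_gimg:
  assumes "finite K" "fsubspace K {..<n} U" "X \<subseteq> vecs UNIV n"
  shows "restr_c K m (gimg K n m h X) U = gmat K n m h ` {v \<in> X. \<forall>w\<in>perp K n U. dotp n w v = 0}"
  unfolding restr_c_iff[OF subfield assms(1,2)] gimg_def using gmat_cols_in_iff[OF assms(1,2)] assms(3)
  by auto

end

definition change_basis :: "'b::field set \<Rightarrow> nat \<Rightarrow> (nat \<Rightarrow> 'b) \<Rightarrow> (nat \<Rightarrow> 'b) \<Rightarrow> (nat \<Rightarrow> 'b) \<Rightarrow> nat \<Rightarrow> 'b" where
  "change_basis K m g h c = coord K m g (\<Sum>k<m. c k * h k)"

locale two_bases = g: field_basis K m g + h: field_basis K m h
  for K :: "'b::field set" and m :: nat and g h :: "nat \<Rightarrow> 'b"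
begin

abbreviation "\<phi> \<equiv> change_basis K m g h"

lemma change_basis_coord: "\<phi> (coord K m h x) = coord K m g x"
  unfolding change_basis_def h.sum_coord ..

lemma change_basis_in_vecs: "\<phi> c \<in> vecs K m"
  unfolding change_basis_def by (rule g.coord_in_vecs)

lemma bij_betw_change_basis: "bij_betw \<phi> (vecs K m) (vecs K m)"
  by (rule bij_betw_byWitness[where f' = "change_basis K m h g"])
    (auto simp: change_basis_def g.coord_sum h.coord_sum g.sum_coord h.sum_coord g.coord_in_vecs h.coord_in_vecs)

lemma change_basis_add: "\<phi> (u + v) = \<phi> u + \<phi> v"
  unfolding change_basis_def by (simp add: distrib_right sum.distrib g.coord_add plus_fun_def)

lemma change_basis_vsc: "c \<in> K \<Longrightarrow> \<phi> (vsc c u) = vsc c (\<phi> u)"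
  unfolding change_basis_def vsc_def by (simp add: mult.assoc g.coord_mult flip: sum_distrib_left)

lemma fsubspace_change_basis_image:
  assumes A: "fsubspace K {..<m} A"
  shows "fsubspace K {..<m} (\<phi> ` A)"
  unfolding fsubspace_lessThan_iff ksubspace_def
proof (intro conjI ballI)
  show "\<phi> ` A \<subseteq> vecs K m" using change_basis_in_vecs by blast
  have "\<phi> 0 = 0" using change_basis_add[of 0 0] by simp
  then show "0 \<in> \<phi> ` A" using fsubspace_zero[OF A] by (metis image_eqI)
  show "x + y \<in> \<phi> ` A" if xy: "x \<in> \<phi> ` A" "y \<in> \<phi> ` A" for x y
  proof -
    obtain u v where "x = \<phi> u" "y = \<phi> v" "u \<in> A" "v \<in> A" using xy by blast
    then show ?thesis using fsubspace_add[OF A] by (simp add: imageI flip: change_basis_add)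
  qed
  show "vsc c x \<in> \<phi> ` A" if c: "c \<in> K" and x: "x \<in> \<phi> ` A" for c x
  proof -
    obtain u where u: "x = \<phi> u" "u \<in> A" using x by blast
    have "vsc c u \<in> A" using fsubspace_scale[OF A c u(2)] by (simp add: vsc_def)
    moreover have "vsc c x = \<phi> (vsc c u)" using c u(1) by (simp add: change_basis_vsc)
    ultimately show ?thesis by simp
  qed
qed

end

section \<open>Codes over the extension field and their matrix images\<close>

lemma rm_codeD:
  assumes "rm_code n C"
  shows "fsubspace UNIV {..<n} C" and "ksubspace K vsc C" and "C \<subseteq> vecs UNIV n"
  using assms unfolding rm_code_def fsubspace_lessThan_iff ksubspace_def by blast+

locale dual_bases = two_bases K m g gs
  for K :: "'b::field set" and m :: nat and g gs :: "nat \<Rightarrow> 'b" +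
  assumes finite_field: "finite (UNIV :: 'b set)"
    and trace_dual: "\<And>i j. i < m \<Longrightarrow> j < m \<Longrightarrow> trace K m (g i * gs j) = (if i = j then 1 else 0)"
begin

lemma finite_subfield: "finite K"
  using finite_subset[OF subset_UNIV finite_field] .

lemmas subfield = g.subfield

lemma trace_mult_coord: "trace K m (x * y) = (\<Sum>j<m. coord K m gs x j * coord K m g y j)"
proof -
  let ?b = "coord K m gs x" and ?a = "coord K m g y"
  have "x * y = (\<Sum>k<m. ?b k * gs k) * (\<Sum>j<m. ?a j * g j)"
    by (simp only: h.sum_coord g.sum_coord)
  also have "\<dots> = (\<Sum>k<m. \<Sum>j<m. (?b k * ?a j) * (g j * gs k))"
    unfolding sum_product by (simp add: mult_ac)
  finally have xy: "x * y = (\<Sum>k<m. \<Sum>j<m. (?b k * ?a j) * (g j * gs k))" .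
  have "trace K m (x * y) = (\<Sum>k<m. \<Sum>j<m. (?b k * ?a j) * trace K m (g j * gs k))"
    unfolding xy trace_sum[OF finite_field subfield]
    by (intro sum.cong refl trace_scale[OF finite_field subfield] subfield_mult[OF subfield]
        g.coord_in_subfield h.coord_in_subfield)
  also have "\<dots> = (\<Sum>k<m. \<Sum>j<m. if j = k then ?b k * ?a j else 0)"
    by (intro sum.cong refl) (simp add: trace_dual)
  finally show ?thesis by simp
qed

text \<open>Trace duality: \<open>\<langle>w, v\<rangle> = 0\<close> implies \<open>Tr(\<langle>w, v\<rangle>) = 0\<close>, which by the lemma above is the
  trace form of \<open>\<Gamma>\<^sup>*(w)\<close> and \<open>\<Gamma>(v)\<close>; equality then follows by counting.\<close>

theorem gimg_perp_eq_mat_dual: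
  assumes C: "rm_code n C"
  shows "gimg K n m g (perp UNIV n C) = mat_dual K n m (gimg K n m gs C)"
proof -
  let ?C' = "perp UNIV n C"
  note C' = fsubspace_perp[OF subfield_UNIV finite_field, of n C]
  have "gimg K n m g ?C' \<subseteq> mat_dual K n m (gimg K n m gs C)"
  proof
    fix N assume "N \<in> gimg K n m g ?C'"
    then obtain v where N: "N = gmat K n m g v" and v: "v \<in> ?C'" by (auto simp: gimg_def)
    have "(\<Sum>i<n. \<Sum>j<m. M i j * N i j) = 0" if "M \<in> gimg K n m gs C" for M
    proof -
      from that obtain w where M: "M = gmat K n m gs w" and w: "w \<in> C" by (auto simp: gimg_def)
      have "(\<Sum>i<n. \<Sum>j<m. M i j * N i j) = trace K m (dotp n w v)"
        unfolding M N dotp_def trace_sum[OF finite_field subfield] trace_mult_coord by (simp add: gmat_def)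
      also have "dotp n w v = 0" using v w unfolding perp_def by auto
      finally show ?thesis by (simp add: trace_zero[OF finite_field subfield])
    qed
    then show "N \<in> mat_dual K n m (gimg K n m gs C)" unfolding mat_dual_iff N using g.gmat_in_mats by auto
  qed
  moreover have "card (mat_dual K n m (gimg K n m gs C)) = card (gimg K n m g ?C')"
  proof -
    have D: "msubspace K n m (gimg K n m gs C)" by (rule h.msubspace_gimg[OF rm_codeD(2)[OF C]])
    have "card C * card ?C' = card K ^ (n * m)"
      using card_mult_card_fperp[OF subfield_UNIV finite_field _ rm_codeD(1)[OF C]]
      by (simp add: perp_eq_fperp g.card_UNIV_eq power_mult mult.commute)
    also have "\<dots> = card (gimg K n m gs C) * card (mat_dual K n m (gimg K n m gs C))"
      using kdim_mat_dual[OF subfield finite_subfield D] card_msubspace[OF subfield finite_subfield D]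
        card_msubspace[OF subfield finite_subfield msubspace_mat_dual[OF subfield finite_subfield]]
      by (simp add: power_add[symmetric] add.commute)
    also have "card (gimg K n m gs C) = card C" by (rule h.card_gimg[OF rm_codeD(3)[OF C]])
    finally have "card (mat_dual K n m (gimg K n m gs C)) = card ?C'"
      using fsubspace_zero[OF rm_codeD(1)[OF C]]
        fsubspace_finite[OF _ finite_field rm_codeD(1)[OF C]] by (auto simp: card_gt_0_iff)
    also have "\<dots> = card (gimg K n m g ?C')"
      using g.card_gimg[of ?C' n] C' by (simp add: fsubspace_lessThan_iff)
    finally show ?thesis .
  qed
  moreover have "finite (mat_dual K n m (gimg K n m gs C))"
    by (rule msubspace_finite[OF subfield finite_subfield msubspace_mat_dual[OF subfield finite_subfield]])
  ultimately show ?thesis by (metis card_subset_eq)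
qed

lemma kdim_restr_c_gimg_basis_independent:
  assumes C: "rm_code n C" and A: "fsubspace K {..<n} A"
  shows "kdim K msc (restr_c K m (gimg K n m gs C) A) = kdim K msc (restr_c K m (gimg K n m g C) A)"
proof -
  let ?S = "{v \<in> C. \<forall>w\<in>perp K n A. dotp n w v = 0}"
  have S: "?S \<subseteq> vecs UNIV n" using rm_codeD(3)[OF C] by blast
  have "card (restr_c K m (gimg K n m gs C) A) = card ?S" "card (restr_c K m (gimg K n m g C) A) = card ?S"
    unfolding h.restr_c_gimg[OF finite_subfield A rm_codeD(3)[OF C]]
      g.restr_c_gimg[OF finite_subfield A rm_codeD(3)[OF C]]
    by (rule card_image[OF inj_on_subset[OF h.inj_on_gmat S]], rule card_image[OF inj_on_subset[OF g.inj_on_gmat S]])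
  then show ?thesis
    using msubspace_restr_c[OF subfield finite_subfield _ A] h.msubspace_gimg g.msubspace_gimg
      rm_codeD(2)[OF C] by (metis kdim_msubspace_eqI[OF subfield finite_subfield])
qed

lemma kdim_restr_r_gimg_change_basis:
  assumes C: "rm_code n C" and A: "fsubspace K {..<m} A"
  shows "kdim K msc (restr_r K n (gimg K n m g C) (\<phi> ` A)) = kdim K msc (restr_r K n (gimg K n m gs C) A)"
proof -
  let ?S = "{v \<in> C. \<forall>i<n. coord K m gs (v i) \<in> A}"
  have S: "?S \<subseteq> vecs UNIV n" using rm_codeD(3)[OF C] by blast
  have "coord K m g x \<in> \<phi> ` A \<longleftrightarrow> coord K m gs x \<in> A" for x
    unfolding change_basis_coord[symmetric]
    using inj_on_image_mem_iff[OF bij_betw_imp_inj_on[OF bij_betw_change_basis] h.coord_in_vecs]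
      fsubspace_subset[OF A] by (simp add: vecs_eq_fvecs)
  then have "restr_r K n (gimg K n m g C) (\<phi> ` A) = gmat K n m g ` ?S"
    "restr_r K n (gimg K n m gs C) A = gmat K n m gs ` ?S"
    by (simp_all add: g.restr_r_gimg[OF finite_subfield fsubspace_change_basis_image[OF A]]
        h.restr_r_gimg[OF finite_subfield A])
  moreover have "card (gmat K n m g ` ?S) = card (gmat K n m gs ` ?S)"
    using card_image[OF inj_on_subset[OF h.inj_on_gmat S]] card_image[OF inj_on_subset[OF g.inj_on_gmat S]]
    by simp
  ultimately show ?thesis
    using msubspace_restr_r[OF subfield finite_subfield _ fsubspace_change_basis_image[OF A]]
      msubspace_restr_r[OF subfield finite_subfield _ A] h.msubspace_gimg g.msubspace_gimg
      rm_codeD(2)[OF C] by (metis kdim_msubspace_eqI[OF subfield finite_subfield])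
qed

lemma kdim_change_basis_image:
  assumes A: "fsubspace K {..<m} A"
  shows "kdim K vsc (\<phi> ` A) = kdim K vsc A"
  using kdim_fsubspace_eqI[OF subfield finite_subfield fsubspace_change_basis_image[OF A] A]
    card_image[OF inj_on_subset[OF bij_betw_imp_inj_on[OF bij_betw_change_basis]]]
    fsubspace_subset[OF A] by (simp add: vecs_eq_fvecs)

end

theorem corollary7p2:
  fixes K :: "'b::field set" and n m :: nat and C :: "(nat \<Rightarrow> 'b) set"
    and g gs :: "nat \<Rightarrow> 'b"
  assumes "finite (UNIV :: 'b set)"
    and "subfield K"
    and "2 \<le> n" and "n \<le> m"
    and "rm_code n C"
    and "is_basis K m g"
    and "is_dual_basis K m g gs"
  shows "qpm_eq K n (rho_c K n m (gimg K n m g (perp UNIV n C)))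
                    (pdual K n (rho_c K n m (gimg K n m gs C)))
       \<and> qpm_eq K n (pdual K n (rho_c K n m (gimg K n m gs C)))
                    (pdual K n (rho_c K n m (gimg K n m g C)))
       \<and> qpm_eq K m (rho_r K n m (gimg K n m g (perp UNIV n C)))
                    (pdual K m (rho_r K n m (gimg K n m gs C)))
       \<and> qpm_equiv K m (pdual K m (rho_r K n m (gimg K n m gs C)))
                    (pdual K m (rho_r K n m (gimg K n m g C)))"
proof -
  interpret dual_bases K m g gs
    using assms(1,2,6,7) by unfold_locales (auto simp: is_dual_basis_def)
  note C = assms(5) and K = subfield finite_subfield
  have D: "msubspace K n m (gimg K n m gs C)" and Dg: "msubspace K n m (gimg K n m g C)"
    using h.msubspace_gimg g.msubspace_gimg rm_codeD(2)[OF C] by blast+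
  have "n > 0" "m > 0" using assms(3,4) by simp_all
  show ?thesis
    unfolding qpm_eq_def qpm_equiv_def fsubspace_lessThan_iff[symmetric] gimg_perp_eq_mat_dual[OF C]
  proof (intro conjI allI impI exI[of _ \<phi>] ballI)
    show "rho_c K n m (mat_dual K n m (gimg K n m gs C)) A = pdual K n (rho_c K n m (gimg K n m gs C)) A"
      if "fsubspace K {..<n} A" for A
      using rho_c_mat_dual[OF K D \<open>m > 0\<close> that] .
    show "pdual K n (rho_c K n m (gimg K n m gs C)) A = pdual K n (rho_c K n m (gimg K n m g C)) A"
      if "fsubspace K {..<n} A" for A
      unfolding pdual_rho_c[OF K D that] pdual_rho_c[OF K Dg that]
        kdim_restr_c_gimg_basis_independent[OF C that] ..
    show "rho_r K n m (mat_dual K n m (gimg K n m gs C)) A = pdual K m (rho_r K n m (gimg K n m gs C)) A"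
      if "fsubspace K {..<m} A" for A
      using rho_r_mat_dual[OF K D \<open>n > 0\<close> that] .
    show "pdual K m (rho_r K n m (gimg K n m gs C)) A = pdual K m (rho_r K n m (gimg K n m g C)) (\<phi> ` A)"
      if "fsubspace K {..<m} A" for A
      unfolding pdual_rho_r[OF K D that] pdual_rho_r[OF K Dg fsubspace_change_basis_image[OF that]]
        kdim_change_basis_image[OF that] kdim_restr_r_gimg_change_basis[OF C that] ..
  qed (use bij_betw_change_basis change_basis_add change_basis_vsc in auto)
qed

end
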